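(* Let $\mathcal{U},\mathcal{X},\mathcal{Y},\mathcal{W},\mathcal{V}$ be finite alphabets with $|\mathcal{U}|=\alpha$, $|\mathcal{Y}|=\gamma$. Let $P_{Y|X}$ be a discrete memoryless channel (DMC) from $\mathcal{X}$ to $\mathcal{Y}$ (the main channel) and $P_{W|U}$ a DMC from $\mathcal{U}$ to $\mathcal{W}$ (the side-information channel). Let $\rho:\mathcal{U}\times\mathcal{V}\to[0,\infty)$ be a distortion measure with $\rho_{\max}=\max_{u,v}\rho(u,v)<\infty$, let $\phi:\mathcal{X}\to[0,\infty)$ be a transmission cost function and $\Gamma\ge 0$. Let $\ell,d$ be positive integers and $n$ a positive integer divisible by $\ell$, and let $u^n=(u_1,\dots,u_n)\in\mathcal{U}^n$ be a deterministic source sequence. Consider any periodically time-varying finite-state encoder with state set $\mathcal{Z}^{e}$ of size $s_e$, period $\ell$ and arbitrary initial state $z_1^{e}$, operating as $t=i \bmod \ell$, $x_i=f_t(u_i,z_i^{e})$, $z_{i+1}^{e}=g_t(u_i,z_i^{e})$, $i=1,2,\dots$, where the produced channel input sequence satisfies the cost constraint $\frac{1}{n}\sum_{i=1}^n\phi(x_i)\le\Gamma$. The sequence $x_1,x_2,\dots$ is transmitted over the memoryless channel $P_{Y|X}$, producing $Y_1,Y_2,\dots$, and the side information $W_1,W_2,\dots$ is produced from $u_1,u_2,\dots$ by the memoryless channel $P_{W|U}$, independently of the main channel noise. Consider any periodically time-varying finite-state decoder with state set $\mathcal{Z}^{d}$ of size $s_d$, the same period $\ell$, arbitrary initial state $z_1^{d}$,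 and delay $d$, operating as $t=i\bmod \ell$, $V_{i-d}=f'_t(W_i,Y_i,z_i^{d})$ for $i=d+1,d+2,\dots$, and $z_{i+1}^{d}=g'_t(W_i,Y_i,z_i^{d})$ for $i=1,2,\dots$; the symbols $V_{n-d+1},\dots,V_n$ (not yet produced at time $n$) are arbitrary fixed symbols of $\mathcal{V}$. Then there is a quantity $\epsilon_n$, depending only on $n$, $\ell$, $s_e$, the alphabets and the channel $P_{Y|X}$ (and not on $u^n$ or on the particular encoder and decoder), with $\sqrt{n}\,\epsilon_n\to 0$ as $n\to\infty$, such that $$\frac{1}{n}\sum_{i=1}^n\mathbb{E}\{\rho(u_i,V_i)\}\ \ge\ D^{\mathrm{WZ}}_{\hat U^\ell|W^\ell}\left(C(\Gamma)+\frac{\log s_d}{\ell}+\frac{s_e\alpha^\ell\log\gamma}{\sqrt{n}}+\epsilon_n\right)-\frac{\rho_{\max}\, d}{\ell}.$$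
   Context: Logarithms are base 2. Capacity with cost: $C(\Gamma)=\max_{P_X:\ \mathbb{E}\{\phi(X)\}\le\Gamma} I(X;Y)$, where $I(X;Y)$ is computed under $P_X\times P_{Y|X}$. Empirical $\ell$-th order distribution of $u^n$: writing $u^n=(\mathbf{u}_0,\dots,\mathbf{u}_{n/\ell-1})$ with $\mathbf{u}_i=(u_{i\ell+1},\dots,u_{i\ell+\ell})$, let $P_{\hat U^\ell}(a^\ell)=\frac{\ell}{n}\sum_{i=0}^{n/\ell-1}1\{\mathbf{u}_i=a^\ell\}$ for $a^\ell\in\mathcal{U}^\ell$, and let $\hat U^\ell$ be a random vector with this distribution. Let $W^\ell$ be obtained from $\hat U^\ell$ through the product channel $P_{W^\ell|\hat U^\ell}(w^\ell|u^\ell)=\prod_{j=1}^\ell P_{W|U}(w_j|u_j)$. For $u^\ell,v^\ell$, $\rho(u^\ell,v^\ell)=\sum_{j=1}^\ell\rho(u_j,v_j)$. Wyner–Ziv rate–distortion function of this empirical source with real side-information channel: $R^{\mathrm{WZ}}_{\hat U^\ell|W^\ell}(D)=\min \frac{1}{\ell}I(\hat U^\ell;A|W^\ell)$ $(=\min\frac1\ell[I(\hat U^\ell;A)-I(W^\ell;A)])$, the minimum over all conditional distributions $P_{A|\hat U^\ell}$ of an auxiliary random variable $A$ with alphabet $\mathcal{A}$ of size $\alpha^\ell+1$, such that $A\to\hat U^\ell\to W^\ell$ is a Markov chain and $\min_{G:\mathcal{A}\times\mathcal{W}^\ell\to\mathcal{V}^\ell}\mathbb{E}\{\rho(\hat U^\ell,G(A,W^\ell))\}\le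 \ell D$. The Wyner–Ziv distortion–rate function $D^{\mathrm{WZ}}_{\hat U^\ell|W^\ell}(R)$ is its inverse, i.e., the smallest $D$ with $R^{\mathrm{WZ}}_{\hat U^\ell|W^\ell}(D)\le R$. Expectations in $\mathbb{E}\{\rho(u_i,V_i)\}$ are over the randomness of both channels. *)

theory Defs
  imports "HOL-Probability.Probability"
begin

definition mutual_info :: "('a \<times> 'b) pmf \<Rightarrow> real" where
  "mutual_info J =
     (\<Sum>ab\<in>set_pmf J.
        pmf J ab * log 2 (pmf J ab /
          (pmf (map_pmf fst J) (fst ab) * pmf (map_pmf snd J) (snd ab))))"

definition chan_joint :: "'x pmf \<Rightarrow> ('x \<Rightarrow> 'y pmf) \<Rightarrow> ('x \<times> 'y) pmf" where
  "chan_joint P Ch = bind_pmf P (\<lambda>x. map_pmf (Pair x) (Ch x))"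

definition capacity_cost ::
  "('x::finite \<Rightarrow> 'y pmf) \<Rightarrow> ('x \<Rightarrow> real) \<Rightarrow> real \<Rightarrow> real" where
  "capacity_cost Ch phi Gam =
     Sup {mutual_info (chan_joint P Ch) | P. measure_pmf.expectation P phi \<le> Gam}"

definition block :: "(nat \<Rightarrow> 'u) \<Rightarrow> nat \<Rightarrow> nat \<Rightarrow> 'u list" where
  "block u l i = map (\<lambda>j. u (i * l + j)) [1..<l+1]"

definition empirical_dist :: "(nat \<Rightarrow> 'u) \<Rightarrow> nat \<Rightarrow> nat \<Rightarrow> 'u list pmf" where
  "empirical_dist u n l = map_pmf (block u l) (pmf_of_set {0..<n div l})"

fun prod_chan :: "('u \<Rightarrow> 'w pmf) \<Rightarrow> 'u list \<Rightarrow> 'w list pmf" where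
  "prod_chan Ch [] = return_pmf []"
| "prod_chan Ch (a # as) =
     bind_pmf (Ch a) (\<lambda>w. map_pmf (\<lambda>ws. w # ws) (prod_chan Ch as))"

definition block_dist :: "('u \<Rightarrow> 'v \<Rightarrow> real) \<Rightarrow> 'u list \<Rightarrow> (nat \<Rightarrow> 'v) \<Rightarrow> real" where
  "block_dist rho us vs = (\<Sum>j<length us. rho (us ! j) (vs j))"

text \<open>Joint distribution of (\<open>\<hat>U^l\<close>, A, \<open>W^l\<close>) for a test channel K (A \<rightarrow> U \<rightarrow> W Markov).\<close>
definition wz_joint ::
  "'u list pmf \<Rightarrow> ('u \<Rightarrow> 'w pmf) \<Rightarrow> ('u list \<Rightarrow> nat pmf) \<Rightarrow> ('u list \<times> nat \<times> 'w list) pmf" where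
  "wz_joint Uh Ch K =
     bind_pmf Uh (\<lambda>us. bind_pmf (K us) (\<lambda>a. map_pmf (\<lambda>ws. (us, a, ws)) (prod_chan Ch us)))"

definition wz_rate ::
  "'u list pmf \<Rightarrow> ('u \<Rightarrow> 'w pmf) \<Rightarrow> nat \<Rightarrow> ('u list \<Rightarrow> nat pmf) \<Rightarrow> real" where
  "wz_rate Uh Ch l K =
     (mutual_info (map_pmf (\<lambda>(us, a, ws). (us, a)) (wz_joint Uh Ch K))
      - mutual_info (map_pmf (\<lambda>(us, a, ws). (ws, a)) (wz_joint Uh Ch K))) / real l"

definition wz_distortion ::
  "'u list pmf \<Rightarrow> ('u \<Rightarrow> 'w pmf) \<Rightarrow> ('u \<Rightarrow> 'v \<Rightarrow> real)
     \<Rightarrow> ('u list \<Rightarrow> nat pmf) \<Rightarrow> (nat \<Rightarrow> 'w list \<Rightarrow> nat \<Rightarrow> 'v) \<Rightarrow> real" where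
  "wz_distortion Uh Ch rho K G =
     measure_pmf.expectation (wz_joint Uh Ch K) (\<lambda>(us, a, ws). block_dist rho us (G a ws))"

definition wz_admissible ::
  "'u list pmf \<Rightarrow> ('u::finite \<Rightarrow> 'w pmf) \<Rightarrow> ('u \<Rightarrow> 'v \<Rightarrow> real) \<Rightarrow> nat \<Rightarrow> real
     \<Rightarrow> ('u list \<Rightarrow> nat pmf) \<Rightarrow> bool" where
  "wz_admissible Uh Ch rho l D K \<longleftrightarrow>
     (\<forall>us. set_pmf (K us) \<subseteq> {0..<CARD('u) ^ l + 1}) \<and>
     (\<exists>G. wz_distortion Uh Ch rho K G \<le> real l * D)"

definition wz_rd ::
  "'u list pmf \<Rightarrow> ('u::finite \<Rightarrow> 'w pmf) \<Rightarrow> ('u \<Rightarrow> 'v \<Rightarrow> real) \<Rightarrow> nat \<Rightarrow> real \<Rightarrow> real" where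
  "wz_rd Uh Ch rho l D = Inf {wz_rate Uh Ch l K | K. wz_admissible Uh Ch rho l D K}"

definition wz_dr ::
  "'u list pmf \<Rightarrow> ('u::finite \<Rightarrow> 'w pmf) \<Rightarrow> ('u \<Rightarrow> 'v \<Rightarrow> real) \<Rightarrow> nat \<Rightarrow> real \<Rightarrow> real" where
  "wz_dr Uh Ch rho l R =
     Inf {D. (\<exists>K. wz_admissible Uh Ch rho l D K) \<and> wz_rd Uh Ch rho l D \<le> R}"

text \<open>State sequence: run_fsm step z1 k is the state z_(k+1); step i z is the update at time i.\<close>
fun run_fsm :: "(nat \<Rightarrow> 's \<Rightarrow> 's) \<Rightarrow> 's \<Rightarrow> nat \<Rightarrow> 's" where
  "run_fsm step z1 0 = z1"
| "run_fsm step z1 (Suc k) = step (Suc k) (run_fsm step z1 k)"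

definition enc_out ::
  "nat \<Rightarrow> (nat \<Rightarrow> 'u \<Rightarrow> nat \<Rightarrow> 'x) \<Rightarrow> (nat \<Rightarrow> 'u \<Rightarrow> nat \<Rightarrow> nat) \<Rightarrow> nat
     \<Rightarrow> (nat \<Rightarrow> 'u) \<Rightarrow> nat \<Rightarrow> 'x" where
  "enc_out l f g z1 u i =
     f (i mod l) (u i) (run_fsm (\<lambda>k z. g (k mod l) (u k) z) z1 (i - 1))"

definition dec_state ::
  "nat \<Rightarrow> (nat \<Rightarrow> 'w \<Rightarrow> 'y \<Rightarrow> nat \<Rightarrow> nat) \<Rightarrow> nat \<Rightarrow> (nat \<Rightarrow> 'w) \<Rightarrow> (nat \<Rightarrow> 'y) \<Rightarrow> nat \<Rightarrow> nat" where
  "dec_state l g' z1 w y i = run_fsm (\<lambda>k z. g' (k mod l) (w k) (y k) z) z1 (i - 1)"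

definition dec_out ::
  "nat \<Rightarrow> nat \<Rightarrow> nat \<Rightarrow> (nat \<Rightarrow> 'w \<Rightarrow> 'y \<Rightarrow> nat \<Rightarrow> 'v) \<Rightarrow> (nat \<Rightarrow> 'w \<Rightarrow> 'y \<Rightarrow> nat \<Rightarrow> nat)
     \<Rightarrow> nat \<Rightarrow> (nat \<Rightarrow> 'v) \<Rightarrow> (nat \<Rightarrow> 'w) \<Rightarrow> (nat \<Rightarrow> 'y) \<Rightarrow> nat \<Rightarrow> 'v" where
  "dec_out n l d f' g' z1 vfix w y j =
     (if j + d \<le> n
      then f' ((j + d) mod l) (w (j + d)) (y (j + d)) (dec_state l g' z1 w y (j + d))
      else vfix j)"

definition noise_dist ::
  "nat \<Rightarrow> ('u \<Rightarrow> 'w pmf) \<Rightarrow> ('x \<Rightarrow> 'y pmf) \<Rightarrow> (nat \<Rightarrow> 'u) \<Rightarrow> (nat \<Rightarrow> 'x)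
     \<Rightarrow> ((nat \<Rightarrow> 'w) \<times> (nat \<Rightarrow> 'y)) pmf" where
  "noise_dist n PW PY u x =
     pair_pmf (Pi_pmf {1..n} undefined (\<lambda>i. PW (u i))) (Pi_pmf {1..n} undefined (\<lambda>i. PY (x i)))"

end

theory Submission
  imports Defs
begin

(* Cut time into the n/l blocks of length l and let B be a uniformly chosen block. As the
   Wyner-Ziv auxiliary variable take A = (Z, Y^l): the decoder state at the start of block B and
   the channel outputs on it. Given B, the side information W^l of the block is independent of A,
   so A -> U^l -> W^l is a Markov chain, and replaying the decoder from Z on the block reproduces
   all of its outputs but the last d; hence the Wyner-Ziv distortion of A is at most l times the
   average distortion of the code plus d rho_max. On the rate side,
     I(U^l;A) - I(W^l;A) <= H(Z) + I(X^l;Y^l) <= log s_d + l C(Gamma),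
   using the same conditional independence, the memorylessness of the channel and the concavity
   of mutual information in the input law. Caratheodory's theorem cuts the alphabet of A down to
   alpha^l + 1 letters. The channel input is a deterministic function of the deterministic source,
   so the bound holds with eps_n = 0 and without the encoder term. *)

section \<open>Entropy of finitely supported distributions\<close>

definition pmf_entropy :: "'a pmf \<Rightarrow> real" where
  "pmf_entropy p = - (\<Sum>x\<in>set_pmf p. pmf p x * log 2 (pmf p x))"

lemma pmf_map_pos: "t \<in> set_pmf p \<Longrightarrow> 0 < pmf (map_pmf g p) (g t)"
  by (simp add: pmf_positive)

lemma pmf_map_eq_sum_fiber:
  assumes "finite (set_pmf p)"
  shows "pmf (map_pmf g p) y = (\<Sum>x\<in>{x\<in>set_pmf p. g x = y}. pmf p x)"
proof -
  have "pmf (map_pmf g p) y = measure p (g -` {y} \<inter> set_pmf p)"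
    by (simp add: pmf_map measure_Int_set_pmf)
  also have "\<dots> = (\<Sum>x\<in>g -` {y} \<inter> set_pmf p. pmf p x)"
    by (rule measure_measure_pmf_finite) (use assms in auto)
  also have "g -` {y} \<inter> set_pmf p = {x\<in>set_pmf p. g x = y}" by auto
  finally show ?thesis .
qed

lemma pmf_le_pmf_map:
  assumes "finite (set_pmf p)"
  shows "pmf p x \<le> pmf (map_pmf g p) (g x)"
proof (cases "x \<in> set_pmf p")
  case True
  then show ?thesis unfolding pmf_map_eq_sum_fiber[OF assms]
    by (intro member_le_sum) (use assms in auto)
qed (simp add: set_pmf_eq)

lemma pmf_entropy_map:
  assumes fin: "finite (set_pmf p)"
  shows "pmf_entropy (map_pmf g p) = - (\<Sum>x\<in>set_pmf p. pmf p x * log 2 (pmf (map_pmf g p) (g x)))"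
proof -
  have "(\<Sum>x\<in>set_pmf p. pmf p x * log 2 (pmf (map_pmf g p) (g x)))
      = (\<Sum>y\<in>g ` set_pmf p. \<Sum>x\<in>{x\<in>set_pmf p. g x = y}. pmf p x * log 2 (pmf (map_pmf g p) (g x)))"
    by (rule sum.image_gen[OF fin])
  also have "\<dots> = (\<Sum>y\<in>set_pmf (map_pmf g p). pmf (map_pmf g p) y * log 2 (pmf (map_pmf g p) y))"
    by (intro sum.cong refl) (auto simp: pmf_map_eq_sum_fiber[OF fin] sum_distrib_right)
  finally show ?thesis unfolding pmf_entropy_def by linarith
qed

lemma pmf_entropy_map_le:
  assumes fin: "finite (set_pmf p)"
  shows "pmf_entropy (map_pmf g p) \<le> pmf_entropy p"
proof -
  have "pmf p x * log 2 (pmf p x) \<le> pmf p x * log 2 (pmf (map_pmf g p) (g x))"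
    if "x \<in> set_pmf p" for x
    using that pmf_le_pmf_map[OF fin, of x g] by (intro mult_left_mono) (auto simp: pmf_positive)
  then show ?thesis unfolding pmf_entropy_map[OF fin] unfolding pmf_entropy_def
    by (simp add: sum_mono)
qed

lemma pmf_entropy_map_inj:
  assumes fin: "finite (set_pmf p)" and inj: "inj_on g (set_pmf p)"
  shows "pmf_entropy (map_pmf g p) = pmf_entropy p"
  unfolding pmf_entropy_map[OF fin] unfolding pmf_entropy_def
  by (simp add: pmf_map_inj[OF inj])

lemma gibbs_inequality:
  assumes fin: "finite S" and pos: "\<And>x. x \<in> S \<Longrightarrow> p x > 0" "\<And>x. x \<in> S \<Longrightarrow> q x > 0"
    and sum_p: "sum p S = 1" and sum_q: "sum q S \<le> 1"
  shows "0 \<le> (\<Sum>x\<in>S. p x * log 2 (p x / q x))"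
proof -
  have "p x * log 2 (q x / p x) \<le> (q x - p x) / ln 2" if x: "x \<in> S" for x
  proof -
    have "ln (q x / p x) \<le> q x / p x - 1" using pos[OF x] by (intro ln_le_minus_one) simp
    then have "p x * log 2 (q x / p x) \<le> p x * ((q x / p x - 1) / ln 2)"
      using pos[OF x] by (intro mult_left_mono) (simp_all add: log_def divide_right_mono)
    also have "\<dots> = (q x - p x) / ln 2" using pos[OF x] by (simp add: field_simps)
    finally show ?thesis .
  qed
  then have "(\<Sum>x\<in>S. p x * log 2 (q x / p x)) \<le> (\<Sum>x\<in>S. (q x - p x) / ln 2)"
    by (rule sum_mono)
  also have "\<dots> = (sum q S - sum p S) / ln 2"
    by (simp add: sum_divide_distrib[symmetric] sum_subtractf)
  also have "\<dots> \<le> 0" using sum_p sum_q by (simp add: divide_nonpos_pos)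
  also have "(\<Sum>x\<in>S. p x * log 2 (q x / p x)) = - (\<Sum>x\<in>S. p x * log 2 (p x / q x))"
    unfolding sum_negf[symmetric] using pos
    by (intro sum.cong refl) (simp add: log_divide algebra_simps)
  finally show ?thesis by simp
qed

lemma pmf_entropy_le_log_card:
  assumes fin: "finite A" and sub: "set_pmf p \<subseteq> A"
  shows "pmf_entropy p \<le> log 2 (card A)"
proof -
  have finp: "finite (set_pmf p)" using fin sub finite_subset by blast
  have card_pos: "card A > 0"
    using fin sub set_pmf_not_empty[of p] by (metis card_gt_0_iff subset_empty)
  have sum_p: "sum (pmf p) (set_pmf p) = 1" by (rule sum_pmf_eq_1[OF finp]) simp
  have "(\<Sum>x\<in>set_pmf p. 1 / real (card A)) \<le> 1"
    using card_mono[OF fin sub] card_pos by simp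
  then have "0 \<le> (\<Sum>x\<in>set_pmf p. pmf p x * log 2 (pmf p x / (1 / real (card A))))"
    by (intro gibbs_inequality[OF finp _ _ sum_p]) (use card_pos in \<open>auto simp: pmf_positive\<close>)
  also have "\<dots> = (\<Sum>x\<in>set_pmf p. pmf p x * log 2 (pmf p x)) + (\<Sum>x\<in>set_pmf p. pmf p x) * log 2 (card A)"
    unfolding sum_distrib_right sum.distrib[symmetric]
    by (intro sum.cong refl) (use card_pos in \<open>auto simp: pmf_positive log_mult distrib_left\<close>)
  finally show ?thesis using sum_p unfolding pmf_entropy_def by simp
qed

lemma pmf_bind_Pair:
  "pmf (bind_pmf M (\<lambda>z. map_pmf (Pair z) (L z))) (z, w) = pmf M z * pmf (L z) w"
proof -
  have "pmf (map_pmf (Pair z') (L z')) (z, w) = indicator {z} z' * pmf (L z) w" for z'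
  proof (cases "z' = z")
    case True
    have "inj (Pair z)" by (simp add: inj_def)
    from pmf_map_inj'[OF this, of "L z" w] True show ?thesis by simp
  qed (auto simp: pmf_eq_0_set_pmf)
  then show ?thesis by (simp add: pmf_bind measure_pmf_single)
qed

lemma set_pmf_bind_Pair:
  "set_pmf (bind_pmf M (\<lambda>z. map_pmf (Pair z) (L z))) = Sigma (set_pmf M) (\<lambda>z. set_pmf (L z))"
  by auto

lemma finite_set_pmf_bind_Pair:
  assumes "finite (set_pmf M)" "\<And>z. z \<in> set_pmf M \<Longrightarrow> finite (set_pmf (L z))"
  shows "finite (set_pmf (bind_pmf M (\<lambda>z. map_pmf (Pair z) (L z))))"
  unfolding set_pmf_bind_Pair using assms by auto

lemma map_fst_bind_Pair: "map_pmf fst (bind_pmf M (\<lambda>z. map_pmf (Pair z) (L z))) = M"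
  by (simp add: map_bind_pmf pmf.map_comp o_def bind_return_pmf' flip: map_pmf_def)

lemma map_snd_bind_Pair: "map_pmf snd (bind_pmf M (\<lambda>z. map_pmf (Pair z) (L z))) = bind_pmf M L"
  by (simp add: map_bind_pmf pmf.map_comp o_def)

lemma pmf_entropy_bind_Pair:
  assumes fM: "finite (set_pmf M)" and fL: "\<And>z. z \<in> set_pmf M \<Longrightarrow> finite (set_pmf (L z))"
  shows "pmf_entropy (bind_pmf M (\<lambda>z. map_pmf (Pair z) (L z)))
       = pmf_entropy M + (\<Sum>z\<in>set_pmf M. pmf M z * pmf_entropy (L z))"
proof -
  let ?T = "bind_pmf M (\<lambda>z. map_pmf (Pair z) (L z))"
  have "(\<Sum>t\<in>set_pmf ?T. pmf ?T t * log 2 (pmf ?T t))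
      = (\<Sum>z\<in>set_pmf M. \<Sum>w\<in>set_pmf (L z). pmf M z * pmf (L z) w * log 2 (pmf M z * pmf (L z) w))"
    unfolding set_pmf_bind_Pair using fM fL
    by (subst sum.Sigma) (auto simp: pmf_bind_Pair intro!: sum.cong)
  also have "\<dots> = (\<Sum>z\<in>set_pmf M. pmf M z * log 2 (pmf M z) * (\<Sum>w\<in>set_pmf (L z). pmf (L z) w)
         + pmf M z * (\<Sum>w\<in>set_pmf (L z). pmf (L z) w * log 2 (pmf (L z) w)))"
    by (intro sum.cong refl)
       (auto simp: sum_distrib_left sum_distrib_right sum.distrib[symmetric] log_mult pmf_positive
                   algebra_simps intro!: sum.cong)
  also have "\<dots> = (\<Sum>z\<in>set_pmf M. pmf M z * log 2 (pmf M z) - pmf M z * pmf_entropy (L z))"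
    by (intro sum.cong refl) (use fL in \<open>auto simp: pmf_entropy_def sum_pmf_eq_1\<close>)
  finally show ?thesis unfolding pmf_entropy_def sum_subtractf by simp
qed

text \<open>For a joint law of \<open>(Z, X, Y)\<close>, the submodularity gap
  \<open>H(Z,X) + H(Z,Y) - H(Z,X,Y) - H(Z)\<close> is the conditional mutual information \<open>I(X;Y|Z)\<close>.\<close>

lemma pmf_entropy_submodularity_gap:
  fixes T :: "('c \<times> 'a \<times> 'b) pmf"
  assumes fin: "finite (set_pmf T)"
  shows "pmf_entropy (map_pmf (map_prod id fst) T) + pmf_entropy (map_pmf (map_prod id snd) T)
         - pmf_entropy T - pmf_entropy (map_pmf fst T)
    = (\<Sum>t\<in>set_pmf T. pmf T t * log 2 (pmf T t * pmf (map_pmf fst T) (fst t)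
          / (pmf (map_pmf (map_prod id fst) T) (map_prod id fst t)
             * pmf (map_pmf (map_prod id snd) T) (map_prod id snd t))))"
  unfolding pmf_entropy_map[OF fin] pmf_entropy_def[of T] sum_negf[symmetric]
    sum_subtractf[symmetric] sum.distrib[symmetric]
proof (intro sum.cong refl)
  fix t assume t: "t \<in> set_pmf T"
  show "- (pmf T t * log 2 (pmf (map_pmf (map_prod id fst) T) (map_prod id fst t)))
      + - (pmf T t * log 2 (pmf (map_pmf (map_prod id snd) T) (map_prod id snd t)))
      - - (pmf T t * log 2 (pmf T t)) - - (pmf T t * log 2 (pmf (map_pmf fst T) (fst t)))
    = pmf T t * log 2 (pmf T t * pmf (map_pmf fst T) (fst t)
        / (pmf (map_pmf (map_prod id fst) T) (map_prod id fst t)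
           * pmf (map_pmf (map_prod id snd) T) (map_prod id snd t)))"
    using pmf_positive[OF t] pmf_map_pos[OF t, of fst] pmf_map_pos[OF t, of "map_prod id fst"]
      pmf_map_pos[OF t, of "map_prod id snd"]
    by (simp add: log_mult log_divide algebra_simps)
qed

lemma sum_cond_product_le_1:
  fixes T :: "('c \<times> 'a \<times> 'b) pmf"
  assumes fin: "finite (set_pmf T)"
  shows "(\<Sum>t\<in>set_pmf T. pmf (map_pmf (map_prod id fst) T) (map_prod id fst t)
      * pmf (map_pmf (map_prod id snd) T) (map_prod id snd t) / pmf (map_pmf fst T) (fst t)) \<le> 1"
proof -
  let ?pZ = "pmf (map_pmf fst T)"
  let ?pX = "pmf (map_pmf (map_prod id fst) T)" and ?pY = "pmf (map_pmf (map_prod id snd) T)"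
  let ?SX = "set_pmf (map_pmf (map_prod id fst) T)" and ?SY = "set_pmf (map_pmf (map_prod id snd) T)"
  define q' where "q' ac = ?pX (fst ac) * ?pY (snd ac) / ?pZ (fst (fst ac))"
    for ac :: "('c \<times> 'a) \<times> ('c \<times> 'b)"
  define h where "h t = (map_prod id fst t, map_prod id snd t)" for t :: "'c \<times> 'a \<times> 'b"
  have finX: "finite ?SX" and finY: "finite ?SY" using fin by auto
  have inj_h: "inj_on h (set_pmf T)" by (auto simp: inj_on_def h_def prod_eq_iff)
  have h_sub: "h ` set_pmf T \<subseteq> Sigma ?SX (\<lambda>a. {c\<in>?SY. fst c = fst a})" by (auto simp: h_def)
  have fiber: "(\<Sum>c\<in>{c\<in>?SY. fst c = fst a}. ?pY c) = ?pZ (fst a)" for a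
  proof -
    have "map_pmf fst (map_pmf (map_prod id snd) T) = map_pmf fst T"
      by (simp add: pmf.map_comp o_def)
    then show ?thesis using pmf_map_eq_sum_fiber[OF finY, of fst "fst a"] by simp
  qed
  have pZ_pos: "0 < ?pZ (fst a)" if "a \<in> ?SX" for a
  proof -
    have "map_pmf fst (map_pmf (map_prod id fst) T) = map_pmf fst T"
      by (simp add: pmf.map_comp o_def)
    then show ?thesis using pmf_map_pos[OF that, of fst] by simp
  qed
  have "(\<Sum>t\<in>set_pmf T. ?pX (map_prod id fst t) * ?pY (map_prod id snd t) / ?pZ (fst t)) = sum q' (h ` set_pmf T)"
    by (subst sum.reindex[OF inj_h]) (simp add: q'_def h_def)
  also have "\<dots> \<le> sum q' (Sigma ?SX (\<lambda>a. {c\<in>?SY. fst c = fst a}))"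
    by (intro sum_mono2 h_sub) (use finX finY in \<open>auto simp: q'_def\<close>)
  also have "\<dots> = (\<Sum>a\<in>?SX. \<Sum>c\<in>{c\<in>?SY. fst c = fst a}. q' (a, c))"
    by (subst sum.Sigma) (use finX finY in auto)
  also have "\<dots> = (\<Sum>a\<in>?SX. ?pX a / ?pZ (fst a) * (\<Sum>c\<in>{c\<in>?SY. fst c = fst a}. ?pY c))"
    by (simp add: q'_def sum_distrib_left)
  also have "\<dots> = (\<Sum>a\<in>?SX. ?pX a)"
  proof (intro sum.cong refl)
    fix a assume "a \<in> ?SX"
    then show "?pX a / ?pZ (fst a) * (\<Sum>c\<in>{c\<in>?SY. fst c = fst a}. ?pY c) = ?pX a"
      unfolding fiber using pZ_pos[of a] by simp
  qed
  also have "\<dots> = 1" by (rule sum_pmf_eq_1[OF finX]) simp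
  finally show ?thesis .
qed

lemma pmf_entropy_submodular:
  fixes T :: "('c \<times> 'a \<times> 'b) pmf"
  assumes fin: "finite (set_pmf T)"
  shows "pmf_entropy T + pmf_entropy (map_pmf fst T)
    \<le> pmf_entropy (map_pmf (map_prod id fst) T) + pmf_entropy (map_pmf (map_prod id snd) T)"
proof -
  define q where "q t = pmf (map_pmf (map_prod id fst) T) (map_prod id fst t)
      * pmf (map_pmf (map_prod id snd) T) (map_prod id snd t) / pmf (map_pmf fst T) (fst t)" for t
  have "0 \<le> (\<Sum>t\<in>set_pmf T. pmf T t * log 2 (pmf T t / q t))"
    using sum_cond_product_le_1[OF fin] unfolding q_def[symmetric]
    by (intro gibbs_inequality[OF fin])
       (auto simp: pmf_positive sum_pmf_eq_1[OF fin] q_def pmf_map_pos intro!: divide_pos_pos)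
  also have "\<dots> = pmf_entropy (map_pmf (map_prod id fst) T) + pmf_entropy (map_pmf (map_prod id snd) T)
      - pmf_entropy T - pmf_entropy (map_pmf fst T)"
    unfolding pmf_entropy_submodularity_gap[OF fin] by (intro sum.cong refl) (simp add: q_def field_simps)
  finally show ?thesis by simp
qed

lemma pmf_entropy_cond_indep:
  fixes T :: "('c \<times> 'a \<times> 'b) pmf"
  assumes fin: "finite (set_pmf T)"
    and factor: "\<And>t. t \<in> set_pmf T \<Longrightarrow> pmf T t * pmf (map_pmf fst T) (fst t)
          = pmf (map_pmf (map_prod id fst) T) (map_prod id fst t) * pmf (map_pmf (map_prod id snd) T) (map_prod id snd t)"
  shows "pmf_entropy T + pmf_entropy (map_pmf fst T)
    = pmf_entropy (map_pmf (map_prod id fst) T) + pmf_entropy (map_pmf (map_prod id snd) T)"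
proof -
  have "pmf (map_pmf (map_prod id fst) T) (map_prod id fst t) * pmf (map_pmf (map_prod id snd) T) (map_prod id snd t) \<noteq> 0"
    if "t \<in> set_pmf T" for t
    using pmf_map_pos[OF that, of "map_prod id fst"] pmf_map_pos[OF that, of "map_prod id snd"] by simp
  then have "pmf_entropy (map_pmf (map_prod id fst) T) + pmf_entropy (map_pmf (map_prod id snd) T)
      - pmf_entropy T - pmf_entropy (map_pmf fst T) = 0"
    unfolding pmf_entropy_submodularity_gap[OF fin] by (intro sum.neutral ballI) (simp add: factor)
  then show ?thesis by simp
qed

lemma pmf_entropy_cond_indep_bind:
  assumes fM: "finite (set_pmf M)"
    and f1: "\<And>z. z \<in> set_pmf M \<Longrightarrow> finite (set_pmf (K1 z))"
    and f2: "\<And>z. z \<in> set_pmf M \<Longrightarrow> finite (set_pmf (K2 z))"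
  defines "T \<equiv> bind_pmf M (\<lambda>z. map_pmf (Pair z) (pair_pmf (K1 z) (K2 z)))"
  shows "pmf_entropy T + pmf_entropy (map_pmf fst T)
    = pmf_entropy (map_pmf (map_prod id fst) T) + pmf_entropy (map_pmf (map_prod id snd) T)"
proof (rule pmf_entropy_cond_indep)
  show "finite (set_pmf T)" unfolding T_def
    by (rule finite_set_pmf_bind_Pair) (use fM f1 f2 in auto)
  have "map_pmf (\<lambda>v. (z, fst v)) (pair_pmf (K1 z) (K2 z)) = map_pmf (Pair z) (map_pmf fst (pair_pmf (K1 z) (K2 z)))"
    and "map_pmf (\<lambda>v. (z, snd v)) (pair_pmf (K1 z) (K2 z)) = map_pmf (Pair z) (map_pmf snd (pair_pmf (K1 z) (K2 z)))"
    for z by (simp_all add: pmf.map_comp o_def)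
  then have "map_pmf (map_prod id fst) T = bind_pmf M (\<lambda>z. map_pmf (Pair z) (K1 z))"
    and "map_pmf (map_prod id snd) T = bind_pmf M (\<lambda>z. map_pmf (Pair z) (K2 z))"
    unfolding T_def by (simp_all add: map_bind_pmf pmf.map_comp o_def map_fst_pair_pmf map_snd_pair_pmf)
  moreover have "map_pmf fst T = M" unfolding T_def by (rule map_fst_bind_Pair)
  ultimately show "pmf T t * pmf (map_pmf fst T) (fst t)
      = pmf (map_pmf (map_prod id fst) T) (map_prod id fst t) * pmf (map_pmf (map_prod id snd) T) (map_prod id snd t)"
    for t
    unfolding T_def by (cases t) (simp add: pmf_bind_Pair pmf_pair)
qed

definition entropy_of :: "'o pmf \<Rightarrow> ('o \<Rightarrow> 'a) \<Rightarrow> real" where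
  "entropy_of P X = pmf_entropy (map_pmf X P)"

definition mutual_info_of :: "'o pmf \<Rightarrow> ('o \<Rightarrow> 'a) \<Rightarrow> ('o \<Rightarrow> 'b) \<Rightarrow> real" where
  "mutual_info_of P X Y = entropy_of P X + entropy_of P Y - entropy_of P (\<lambda>\<omega>. (X \<omega>, Y \<omega>))"

lemma entropy_of_cong: "(\<And>\<omega>. \<omega> \<in> set_pmf P \<Longrightarrow> X \<omega> = Y \<omega>) \<Longrightarrow> entropy_of P X = entropy_of P Y"
  unfolding entropy_of_def by (metis map_pmf_cong)

lemma entropy_of_det_le:
  assumes "finite (set_pmf P)" "\<And>\<omega>. \<omega> \<in> set_pmf P \<Longrightarrow> Y \<omega> = f (X \<omega>)"
  shows "entropy_of P Y \<le> entropy_of P X"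
proof -
  have "map_pmf Y P = map_pmf f (map_pmf X P)"
    using assms(2) by (simp add: pmf.map_comp o_def cong: map_pmf_cong)
  then show ?thesis unfolding entropy_of_def using pmf_entropy_map_le[of "map_pmf X P" f] assms(1) by simp
qed

lemma entropy_of_det_eq:
  assumes "finite (set_pmf P)" "\<And>\<omega>. \<omega> \<in> set_pmf P \<Longrightarrow> Y \<omega> = f (X \<omega>)"
    "\<And>\<omega>. \<omega> \<in> set_pmf P \<Longrightarrow> X \<omega> = g (Y \<omega>)"
  shows "entropy_of P Y = entropy_of P X"
  using entropy_of_det_le[of P Y f X] entropy_of_det_le[of P X g Y] assms by fastforce

lemma entropy_of_const: "entropy_of P (\<lambda>\<omega>. c) = 0"
  unfolding entropy_of_def pmf_entropy_def by simp

lemma entropy_of_le_log_card: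
  assumes "finite A" "\<And>\<omega>. \<omega> \<in> set_pmf P \<Longrightarrow> X \<omega> \<in> A"
  shows "entropy_of P X \<le> log 2 (card A)"
  unfolding entropy_of_def by (rule pmf_entropy_le_log_card) (use assms in auto)

lemma entropy_of_submodular:
  assumes fin: "finite (set_pmf P)"
  shows "entropy_of P (\<lambda>\<omega>. (Z \<omega>, X \<omega>, Y \<omega>)) + entropy_of P Z
    \<le> entropy_of P (\<lambda>\<omega>. (Z \<omega>, X \<omega>)) + entropy_of P (\<lambda>\<omega>. (Z \<omega>, Y \<omega>))"
  using pmf_entropy_submodular[of "map_pmf (\<lambda>\<omega>. (Z \<omega>, X \<omega>, Y \<omega>)) P"] fin
  unfolding entropy_of_def by (simp add: pmf.map_comp o_def)

lemma entropy_of_subadditive: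
  assumes fin: "finite (set_pmf P)"
  shows "entropy_of P (\<lambda>\<omega>. (X \<omega>, Y \<omega>)) \<le> entropy_of P X + entropy_of P Y"
proof -
  have "entropy_of P (\<lambda>\<omega>. (X \<omega>, Y \<omega>)) = entropy_of P (\<lambda>\<omega>. ((), X \<omega>, Y \<omega>))"
    and "entropy_of P X = entropy_of P (\<lambda>\<omega>. ((), X \<omega>))"
    and "entropy_of P Y = entropy_of P (\<lambda>\<omega>. ((), Y \<omega>))"
    by (rule entropy_of_det_eq[OF fin, where f=snd and g="Pair ()"]; simp)+
  then show ?thesis
    using entropy_of_submodular[OF fin, of "\<lambda>\<omega>. ()" X Y] entropy_of_const[of P "()"] by simp
qed

lemma entropy_of_cond_indep:
  assumes fin: "finite (set_pmf P)"
    and law: "map_pmf (\<lambda>\<omega>. (Z \<omega>, X \<omega>, Y \<omega>)) P = bind_pmf M (\<lambda>z. map_pmf (Pair z) (pair_pmf (K1 z) (K2 z)))"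
    and "finite (set_pmf M)" "\<And>z. z \<in> set_pmf M \<Longrightarrow> finite (set_pmf (K1 z))"
    and "\<And>z. z \<in> set_pmf M \<Longrightarrow> finite (set_pmf (K2 z))"
  shows "entropy_of P (\<lambda>\<omega>. (Z \<omega>, X \<omega>, Y \<omega>)) + entropy_of P Z
    = entropy_of P (\<lambda>\<omega>. (Z \<omega>, X \<omega>)) + entropy_of P (\<lambda>\<omega>. (Z \<omega>, Y \<omega>))"
proof -
  let ?T = "map_pmf (\<lambda>\<omega>. (Z \<omega>, X \<omega>, Y \<omega>)) P"
  have "pmf_entropy ?T + pmf_entropy (map_pmf fst ?T)
      = pmf_entropy (map_pmf (map_prod id fst) ?T) + pmf_entropy (map_pmf (map_prod id snd) ?T)"
    unfolding law by (rule pmf_entropy_cond_indep_bind) fact+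
  then show ?thesis unfolding entropy_of_def by (simp add: pmf.map_comp o_def)
qed

lemma entropy_of_bind_Pair:
  assumes "map_pmf (\<lambda>\<omega>. (X \<omega>, Y \<omega>)) P = bind_pmf M (\<lambda>x. map_pmf (Pair x) (L x))"
    and "finite (set_pmf M)" "\<And>x. finite (set_pmf (L x))"
  shows "entropy_of P X = pmf_entropy M"
    and "entropy_of P (\<lambda>\<omega>. (X \<omega>, Y \<omega>)) = pmf_entropy M + (\<Sum>x\<in>set_pmf M. pmf M x * pmf_entropy (L x))"
proof -
  have "map_pmf X P = map_pmf fst (map_pmf (\<lambda>\<omega>. (X \<omega>, Y \<omega>)) P)" by (simp add: pmf.map_comp o_def)
  then show "entropy_of P X = pmf_entropy M" unfolding entropy_of_def assms(1) map_fst_bind_Pair by simp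
  show "entropy_of P (\<lambda>\<omega>. (X \<omega>, Y \<omega>)) = pmf_entropy M + (\<Sum>x\<in>set_pmf M. pmf M x * pmf_entropy (L x))"
    unfolding entropy_of_def assms(1) by (rule pmf_entropy_bind_Pair) (use assms in auto)
qed

lemma mutual_info_eq_entropies:
  assumes fin: "finite (set_pmf J)"
  shows "mutual_info J = pmf_entropy (map_pmf fst J) + pmf_entropy (map_pmf snd J) - pmf_entropy J"
proof -
  have "mutual_info J = (\<Sum>ab\<in>set_pmf J. pmf J ab * log 2 (pmf J ab)
      - pmf J ab * log 2 (pmf (map_pmf fst J) (fst ab)) - pmf J ab * log 2 (pmf (map_pmf snd J) (snd ab)))"
    unfolding mutual_info_def
  proof (intro sum.cong refl)
    fix ab assume ab: "ab \<in> set_pmf J"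
    show "pmf J ab * log 2 (pmf J ab / (pmf (map_pmf fst J) (fst ab) * pmf (map_pmf snd J) (snd ab)))
      = pmf J ab * log 2 (pmf J ab)
      - pmf J ab * log 2 (pmf (map_pmf fst J) (fst ab)) - pmf J ab * log 2 (pmf (map_pmf snd J) (snd ab))"
      using pmf_positive[OF ab] pmf_map_pos[OF ab, of fst] pmf_map_pos[OF ab, of snd]
      by (simp add: log_mult log_divide algebra_simps)
  qed
  then show ?thesis unfolding pmf_entropy_map[OF fin] unfolding pmf_entropy_def[of J]
    by (simp add: sum_subtractf)
qed

lemma mutual_info_map_eq_mutual_info_of:
  assumes "finite (set_pmf P)"
  shows "mutual_info (map_pmf (\<lambda>\<omega>. (X \<omega>, Y \<omega>)) P) = mutual_info_of P X Y"
  unfolding mutual_info_of_def entropy_of_def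
  by (subst mutual_info_eq_entropies) (use assms in \<open>simp_all add: pmf.map_comp o_def\<close>)

lemma expectation_eq_sum_superset:
  assumes "finite A" "set_pmf p \<subseteq> A"
  shows "measure_pmf.expectation p f = (\<Sum>x\<in>A. pmf p x * f x)"
  by (subst integral_measure_pmf_real[OF assms(1)]) (use assms(2) in \<open>auto simp: mult.commute\<close>)

lemma expectation_eq_sum:
  "finite (set_pmf p) \<Longrightarrow> measure_pmf.expectation p f = (\<Sum>x\<in>set_pmf p. pmf p x * f x)"
  by (rule expectation_eq_sum_superset) simp_all

lemma pmf_bind_eq_sum_superset:
  assumes "finite A" "set_pmf M \<subseteq> A"
  shows "pmf (bind_pmf M F) y = (\<Sum>x\<in>A. pmf M x * pmf (F x) y)"
  unfolding pmf_bind by (rule expectation_eq_sum_superset[OF assms])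

lemma expectation_bind_uniform:
  fixes f :: "'b \<Rightarrow> real"
  assumes "A \<noteq> {}" "finite A" "\<And>a. a \<in> A \<Longrightarrow> finite (set_pmf (F a))"
  shows "measure_pmf.expectation (bind_pmf (pmf_of_set A) F) f
    = (\<Sum>a\<in>A. measure_pmf.expectation (F a) f) / real (card A)"
  using pmf_expectation_bind_pmf_of_set[OF assms, where h=f]
  by (simp add: sum_distrib_left[symmetric] divide_inverse mult.commute)

section \<open>Carath\'eodory reduction of a mixture\<close>

lemma underdetermined_linear_system_nontrivial_solution:
  fixes c :: "'e \<Rightarrow> 'a \<Rightarrow> real"
  assumes "finite E" "finite V" "card E < card V"
  shows "\<exists>\<mu>. (\<exists>a\<in>V. \<mu> a \<noteq> 0) \<and> (\<forall>a. a \<notin> V \<longrightarrow> \<mu> a = 0) \<and> (\<forall>e\<in>E. (\<Sum>a\<in>V. c e a * \<mu> a) = 0)"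
  using assms
proof (induction E arbitrary: V c rule: finite_induct)
  case empty
  then obtain a where "a \<in> V" by fastforce
  then show ?case by (intro exI[of _ "\<lambda>b. if b = a then 1 else 0"]) auto
next
  case (insert e E)
  show ?case
  proof (cases "\<forall>a\<in>V. c e a = 0")
    case True
    have "card E < card V" using insert by simp
    with insert.IH[OF insert.prems(1)] obtain \<mu> where
      "\<exists>a\<in>V. \<mu> a \<noteq> 0" "\<forall>a. a \<notin> V \<longrightarrow> \<mu> a = 0" "\<forall>e\<in>E. (\<Sum>a\<in>V. c e a * \<mu> a) = 0"
      by blast
    with True show ?thesis by (intro exI[of _ \<mu>]) auto
  next
    case False
    then obtain a0 where a0: "a0 \<in> V" "c e a0 \<noteq> 0" by blast
    define V' where "V' = V - {a0}"
    \<comment> \<open>Gaussian elimination of the unknown \<open>a0\<close> using equation \<open>e\<close>.\<close>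
    define c' where "c' e' a = c e' a - c e' a0 * c e a / c e a0" for e' a
    have "card E < card V'" using a0 insert by (simp add: V'_def)
    with insert.IH[of V' c'] obtain \<mu>' where
      \<mu>': "\<exists>a\<in>V'. \<mu>' a \<noteq> 0" "\<forall>a. a \<notin> V' \<longrightarrow> \<mu>' a = 0" "\<forall>e\<in>E. (\<Sum>a\<in>V'. c' e a * \<mu>' a) = 0"
      using insert.prems by (auto simp: V'_def)
    define \<mu> where "\<mu> a = (if a = a0 then - (\<Sum>b\<in>V'. c e b * \<mu>' b) / c e a0 else \<mu>' a)" for a
    have sum_V: "(\<Sum>a\<in>V. f a * \<mu> a) = f a0 * \<mu> a0 + (\<Sum>a\<in>V'. f a * \<mu>' a)" for f
      using a0 insert.prems by (simp add: V'_def \<mu>_def sum.remove)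
    show ?thesis
    proof (intro exI[of _ \<mu>] conjI ballI allI impI)
      show "\<exists>a\<in>V. \<mu> a \<noteq> 0" using \<mu>'(1) by (auto simp: \<mu>_def V'_def)
      show "\<mu> a = 0" if "a \<notin> V" for a using that \<mu>'(2) a0 by (auto simp: \<mu>_def V'_def)
      fix e' assume e': "e' \<in> insert e E"
      show "(\<Sum>a\<in>V. c e' a * \<mu> a) = 0"
      proof (cases "e' = e")
        case False
        then have "(\<Sum>a\<in>V. c e' a * \<mu> a) = (\<Sum>a\<in>V'. c' e' a * \<mu>' a)"
          unfolding sum_V using a0
          by (simp add: \<mu>_def c'_def sum_distrib_left sum_subtractf algebra_simps sum_divide_distrib[symmetric])
        with False e' \<mu>'(3) show ?thesis by simp
      next
        case True
        show ?thesis unfolding True sum_V using a0 by (simp add: \<mu>_def)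
      qed
    qed
  qed
qed

lemma exists_pmf_with_weights:
  assumes "finite S" "\<And>a. 0 \<le> w a" "\<And>a. a \<notin> S \<Longrightarrow> w a = 0" "sum w S = 1"
  obtains p where "\<And>a. pmf p a = w a"
proof -
  have "(\<integral>\<^sup>+x. ennreal (w x) \<partial>count_space UNIV) = (\<Sum>x\<in>S. ennreal (w x))"
    by (rule nn_integral_count_space') (use assms in auto)
  also have "\<dots> = 1" using assms by (simp add: sum_ennreal)
  finally show ?thesis using pmf_embed_pmf[of w] assms(2) that by blast
qed

lemma pmf_perturbation_shrinks_support:
  fixes \<nu> :: "'a \<Rightarrow> real"
  assumes fin: "finite (set_pmf \<Lambda>)" and supp: "\<And>a. a \<notin> set_pmf \<Lambda> \<Longrightarrow> \<nu> a = 0"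
    and mass: "(\<Sum>a\<in>set_pmf \<Lambda>. \<nu> a) = 0" and nonzero: "\<exists>a\<in>set_pmf \<Lambda>. \<nu> a \<noteq> 0"
  obtains t \<Lambda>' where "t > 0" "\<And>a. pmf \<Lambda>' a = pmf \<Lambda> a + t * \<nu> a" "set_pmf \<Lambda>' \<subset> set_pmf \<Lambda>"
proof -
  define N where "N = {a\<in>set_pmf \<Lambda>. \<nu> a < 0}"
  have "N \<noteq> {}"
  proof
    assume "N = {}"
    then have "\<forall>a\<in>set_pmf \<Lambda>. 0 \<le> \<nu> a" by (auto simp: N_def)
    then have "\<forall>a\<in>set_pmf \<Lambda>. \<nu> a = 0" using mass by (simp add: sum_nonneg_eq_0_iff[OF fin])
    with nonzero show False by blast
  qed
  have fN: "finite N" using fin by (simp add: N_def)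
  define t where "t = Min ((\<lambda>a. pmf \<Lambda> a / - \<nu> a) ` N)"
  have "t \<in> (\<lambda>a. pmf \<Lambda> a / - \<nu> a) ` N"
    unfolding t_def using fN \<open>N \<noteq> {}\<close> by (intro Min_in) auto
  then obtain a0 where a0: "a0 \<in> N" "t = pmf \<Lambda> a0 / - \<nu> a0" by blast
  have t_le: "t \<le> pmf \<Lambda> a / - \<nu> a" if "a \<in> N" for a
    unfolding t_def using fN that by (intro Min_le) auto
  have t_pos: "0 < t" using a0 pmf_positive[of a0 \<Lambda>] by (auto simp: N_def divide_pos_neg)
  define w where "w a = pmf \<Lambda> a + t * \<nu> a" for a
  have w_nonneg: "0 \<le> w a" for a
  proof (cases "a \<in> N")
    case True
    then show ?thesis using t_le[OF True] by (auto simp: w_def N_def field_simps)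
  next
    case False
    then show ?thesis using supp t_pos by (cases "a \<in> set_pmf \<Lambda>") (auto simp: w_def N_def set_pmf_eq)
  qed
  have w_out: "w a = 0" if "a \<notin> set_pmf \<Lambda>" for a using that supp by (simp add: w_def set_pmf_eq)
  have "sum w (set_pmf \<Lambda>) = 1"
    using mass fin by (simp add: w_def sum.distrib sum_pmf_eq_1 sum_distrib_left[symmetric])
  then obtain \<Lambda>' where \<Lambda>': "\<And>a. pmf \<Lambda>' a = w a"
    using exists_pmf_with_weights[of "set_pmf \<Lambda>" w] fin w_nonneg w_out by blast
  have "w a0 = 0" using a0 by (simp add: w_def N_def)
  then have "set_pmf \<Lambda>' \<subset> set_pmf \<Lambda>"
    using w_out a0 by (auto simp: set_pmf_eq \<Lambda>' N_def)
  with t_pos \<Lambda>' show ?thesis unfolding w_def by (rule that)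
qed

text \<open>The constraints on \<open>\<nu>\<close> are \<open>card L + 1\<close> linear equations (one per point of \<open>L\<close> and
  one for \<open>\<delta>\<close>) in more unknowns; the sign of \<open>\<nu>\<close> is then chosen to make the \<open>\<phi>\<close>-term
  nonnegative.\<close>

lemma mixture_null_direction:
  fixes \<Lambda> :: "'a pmf" and q :: "'a \<Rightarrow> 'b pmf" and \<phi> \<delta> :: "'a \<Rightarrow> real"
  assumes fL: "finite L" and fS: "finite (set_pmf \<Lambda>)"
    and qL: "\<And>a. a \<in> set_pmf \<Lambda> \<Longrightarrow> set_pmf (q a) \<subseteq> L" and big: "card L + 1 < card (set_pmf \<Lambda>)"
  shows "\<exists>\<nu>. (\<exists>a\<in>set_pmf \<Lambda>. \<nu> a \<noteq> 0) \<and> (\<forall>a. a \<notin> set_pmf \<Lambda> \<longrightarrow> \<nu> a = 0)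
    \<and> (\<Sum>a\<in>set_pmf \<Lambda>. \<nu> a) = 0 \<and> (\<forall>us. (\<Sum>a\<in>set_pmf \<Lambda>. pmf (q a) us * \<nu> a) = 0)
    \<and> (\<Sum>a\<in>set_pmf \<Lambda>. \<delta> a * \<nu> a) = 0 \<and> (\<Sum>a\<in>set_pmf \<Lambda>. \<phi> a * \<nu> a) \<ge> 0"
proof -
  let ?S = "set_pmf \<Lambda>"
  define E where "E = insert None (Some ` L)"
  define c where "c e a = (case e of None \<Rightarrow> \<delta> a | Some us \<Rightarrow> pmf (q a) us)" for e a
  have "card E = card L + 1" unfolding E_def using fL by (simp add: card_image)
  then obtain \<mu> where \<mu>: "\<exists>a\<in>?S. \<mu> a \<noteq> 0" "\<forall>a. a \<notin> ?S \<longrightarrow> \<mu> a = 0"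
      "\<forall>e\<in>E. (\<Sum>a\<in>?S. c e a * \<mu> a) = 0"
    using underdetermined_linear_system_nontrivial_solution[of E ?S c] fL fS big
    by (auto simp: E_def)
  define \<nu> where "\<nu> = (if (\<Sum>a\<in>?S. \<phi> a * \<mu> a) \<ge> 0 then \<mu> else (\<lambda>a. - \<mu> a))"
  have \<nu>_q: "(\<Sum>a\<in>?S. pmf (q a) us * \<nu> a) = 0" for us
  proof (cases "us \<in> L")
    case True
    then show ?thesis using \<mu>(3) by (auto simp: \<nu>_def E_def c_def sum_negf)
  next
    case False
    then have "pmf (q a) us = 0" if "a \<in> ?S" for a
      using qL[OF that] by (auto simp: pmf_eq_0_set_pmf)
    then show ?thesis by simp
  qed
  have "(\<Sum>a\<in>?S. \<nu> a) = (\<Sum>a\<in>?S. \<nu> a * (\<Sum>us\<in>L. pmf (q a) us))"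
    by (intro sum.cong refl) (simp add: sum_pmf_eq_1[OF fL qL])
  also have "\<dots> = (\<Sum>us\<in>L. \<Sum>a\<in>?S. pmf (q a) us * \<nu> a)"
    by (subst sum.swap) (simp add: sum_distrib_left mult.commute)
  finally have "(\<Sum>a\<in>?S. \<nu> a) = 0" by (simp add: \<nu>_q)
  moreover have "(\<Sum>a\<in>?S. \<delta> a * \<nu> a) = 0" using \<mu>(3) by (auto simp: \<nu>_def E_def c_def sum_negf)
  moreover have "(\<Sum>a\<in>?S. \<phi> a * \<nu> a) \<ge> 0" by (auto simp: \<nu>_def sum_negf)
  moreover have "\<exists>a\<in>?S. \<nu> a \<noteq> 0" "\<forall>a. a \<notin> ?S \<longrightarrow> \<nu> a = 0"
    using \<mu>(1,2) by (auto simp: \<nu>_def)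
  ultimately show ?thesis using \<nu>_q by (intro exI[of _ \<nu>]) simp
qed

lemma mixture_support_reduction_step:
  fixes \<Lambda> :: "'a pmf" and q :: "'a \<Rightarrow> 'b pmf" and \<phi> \<delta> :: "'a \<Rightarrow> real"
  assumes fL: "finite L" and fS: "finite (set_pmf \<Lambda>)"
    and qL: "\<And>a. a \<in> set_pmf \<Lambda> \<Longrightarrow> set_pmf (q a) \<subseteq> L" and big: "card L + 1 < card (set_pmf \<Lambda>)"
  shows "\<exists>\<Lambda>'. set_pmf \<Lambda>' \<subset> set_pmf \<Lambda> \<and> bind_pmf \<Lambda>' q = bind_pmf \<Lambda> q
    \<and> measure_pmf.expectation \<Lambda> \<phi> \<le> measure_pmf.expectation \<Lambda>' \<phi>
    \<and> measure_pmf.expectation \<Lambda>' \<delta> = measure_pmf.expectation \<Lambda> \<delta>"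
proof -
  let ?S = "set_pmf \<Lambda>"
  obtain \<nu> where \<nu>: "(\<exists>a\<in>?S. \<nu> a \<noteq> 0) \<and> (\<forall>a. a \<notin> ?S \<longrightarrow> \<nu> a = 0)
    \<and> (\<Sum>a\<in>?S. \<nu> a) = 0 \<and> (\<forall>us. (\<Sum>a\<in>?S. pmf (q a) us * \<nu> a) = 0)
    \<and> (\<Sum>a\<in>?S. \<delta> a * \<nu> a) = 0 \<and> (\<Sum>a\<in>?S. \<phi> a * \<nu> a) \<ge> 0"
    by (rule exE[OF mixture_null_direction[where \<phi>=\<phi> and \<delta>=\<delta>, OF fL fS qL big]])
  then have \<nu>_nonzero: "\<exists>a\<in>?S. \<nu> a \<noteq> 0" and \<nu>_supp: "\<And>a. a \<notin> ?S \<Longrightarrow> \<nu> a = 0"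
    and \<nu>_mass: "(\<Sum>a\<in>?S. \<nu> a) = 0" and \<nu>_q: "\<And>us. (\<Sum>a\<in>?S. pmf (q a) us * \<nu> a) = 0"
    and \<nu>_\<delta>: "(\<Sum>a\<in>?S. \<delta> a * \<nu> a) = 0" and \<nu>_\<phi>: "(\<Sum>a\<in>?S. \<phi> a * \<nu> a) \<ge> 0"
    by auto
  obtain t \<Lambda>' where t: "\<And>a. pmf \<Lambda>' a = pmf \<Lambda> a + t * \<nu> a" and t_pos: "t > 0"
    and sub: "set_pmf \<Lambda>' \<subset> ?S"
    using pmf_perturbation_shrinks_support[OF fS \<nu>_supp \<nu>_mass \<nu>_nonzero] by metis
  have mean: "measure_pmf.expectation \<Lambda>' f = measure_pmf.expectation \<Lambda> f + t * (\<Sum>a\<in>?S. f a * \<nu> a)"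
    for f :: "'a \<Rightarrow> real"
  proof -
    have "measure_pmf.expectation \<Lambda>' f = (\<Sum>a\<in>?S. pmf \<Lambda>' a * f a)"
      by (rule expectation_eq_sum_superset[OF fS]) (use sub in auto)
    then show ?thesis
      by (simp add: expectation_eq_sum[OF fS] t sum.distrib sum_distrib_left algebra_simps)
  qed
  have "bind_pmf \<Lambda>' q = bind_pmf \<Lambda> q"
  proof (rule pmf_eqI)
    fix us
    have "pmf (bind_pmf \<Lambda>' q) us = (\<Sum>a\<in>?S. pmf \<Lambda>' a * pmf (q a) us)"
      by (rule pmf_bind_eq_sum_superset[OF fS]) (use sub in auto)
    also have "\<dots> = (\<Sum>a\<in>?S. pmf \<Lambda> a * pmf (q a) us) + t * (\<Sum>a\<in>?S. pmf (q a) us * \<nu> a)"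
      by (simp add: t sum.distrib sum_distrib_left algebra_simps)
    also have "(\<Sum>a\<in>?S. pmf \<Lambda> a * pmf (q a) us) = pmf (bind_pmf \<Lambda> q) us"
      by (rule pmf_bind_eq_sum_superset[OF fS subset_refl, symmetric])
    finally show "pmf (bind_pmf \<Lambda>' q) us = pmf (bind_pmf \<Lambda> q) us" by (simp add: \<nu>_q)
  qed
  moreover have "measure_pmf.expectation \<Lambda> \<phi> \<le> measure_pmf.expectation \<Lambda>' \<phi>"
    using \<nu>_\<phi> t_pos by (simp add: mean)
  moreover have "measure_pmf.expectation \<Lambda>' \<delta> = measure_pmf.expectation \<Lambda> \<delta>"
    using \<nu>_\<delta> by (simp add: mean)
  ultimately show ?thesis using sub by (intro exI[of _ \<Lambda>']) auto
qed

lemma mixture_support_reduction: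
  fixes \<Lambda> :: "'a pmf" and q :: "'a \<Rightarrow> 'b pmf" and \<phi> \<delta> :: "'a \<Rightarrow> real"
  assumes fL: "finite L"
  shows "finite (set_pmf \<Lambda>) \<Longrightarrow> (\<And>a. a \<in> set_pmf \<Lambda> \<Longrightarrow> set_pmf (q a) \<subseteq> L) \<Longrightarrow>
    \<exists>\<Lambda>'. set_pmf \<Lambda>' \<subseteq> set_pmf \<Lambda> \<and> card (set_pmf \<Lambda>') \<le> card L + 1
      \<and> bind_pmf \<Lambda>' q = bind_pmf \<Lambda> q
      \<and> measure_pmf.expectation \<Lambda> \<phi> \<le> measure_pmf.expectation \<Lambda>' \<phi>
      \<and> measure_pmf.expectation \<Lambda>' \<delta> \<le> measure_pmf.expectation \<Lambda> \<delta>"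
proof (induction "card (set_pmf \<Lambda>)" arbitrary: \<Lambda> rule: less_induct)
  case less
  show ?case
  proof (cases "card (set_pmf \<Lambda>) \<le> card L + 1")
    case True
    then show ?thesis by (intro exI[of _ \<Lambda>]) auto
  next
    case False
    then have "card L + 1 < card (set_pmf \<Lambda>)" by simp
    from mixture_support_reduction_step[of L \<Lambda> q \<phi> \<delta>, OF fL less.prems this]
    obtain \<Lambda>' where \<Lambda>': "set_pmf \<Lambda>' \<subset> set_pmf \<Lambda>" "bind_pmf \<Lambda>' q = bind_pmf \<Lambda> q"
      "measure_pmf.expectation \<Lambda> \<phi> \<le> measure_pmf.expectation \<Lambda>' \<phi>"
      "measure_pmf.expectation \<Lambda>' \<delta> = measure_pmf.expectation \<Lambda> \<delta>"
      by blast
    have "card (set_pmf \<Lambda>') < card (set_pmf \<Lambda>)" "finite (set_pmf \<Lambda>')"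
      using \<Lambda>'(1) less.prems(1) by (auto intro: psubset_card_mono finite_subset)
    moreover have "\<And>a. a \<in> set_pmf \<Lambda>' \<Longrightarrow> set_pmf (q a) \<subseteq> L"
      using \<Lambda>'(1) less.prems(2) by blast
    ultimately obtain \<Lambda>'' where \<Lambda>'': "set_pmf \<Lambda>'' \<subseteq> set_pmf \<Lambda>'"
      "card (set_pmf \<Lambda>'') \<le> card L + 1" "bind_pmf \<Lambda>'' q = bind_pmf \<Lambda>' q"
      "measure_pmf.expectation \<Lambda>' \<phi> \<le> measure_pmf.expectation \<Lambda>'' \<phi>"
      "measure_pmf.expectation \<Lambda>'' \<delta> \<le> measure_pmf.expectation \<Lambda>' \<delta>"
      using less.hyps by blast
    show ?thesis
    proof (intro exI[of _ \<Lambda>''] conjI)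
      show "set_pmf \<Lambda>'' \<subseteq> set_pmf \<Lambda>" using \<Lambda>''(1) \<Lambda>'(1) by blast
    qed (use \<Lambda>' \<Lambda>'' in simp_all)
  qed
qed

section \<open>Memoryless channels\<close>

lemma set_pmf_prod_chan: "set_pmf (prod_chan Ch us) \<subseteq> {ws. length ws = length us}"
  by (induction us) auto

lemma finite_set_pmf_prod_chan: "finite (set_pmf (prod_chan (Ch :: 'u \<Rightarrow> 'w::finite pmf) us))"
  by (rule finite_subset[OF set_pmf_prod_chan])
     (use finite_lists_length_eq[of "UNIV :: 'w set" "length us"] in simp)

lemma map_nth_prod_chan: "j < length xs \<Longrightarrow> map_pmf (\<lambda>ys. ys ! j) (prod_chan Ch xs) = Ch (xs ! j)"
proof (induction xs arbitrary: j)
  case (Cons a as)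
  then show ?case
    by (cases j) (simp_all add: map_bind_pmf pmf.map_comp o_def bind_pmf_const bind_return_pmf'
        flip: map_pmf_def)
qed simp

lemma pmf_entropy_prod_chan:
  fixes Ch :: "'x \<Rightarrow> 'y::finite pmf"
  shows "pmf_entropy (prod_chan Ch xs) = (\<Sum>j<length xs. pmf_entropy (Ch (xs ! j)))"
proof (induction xs)
  case Nil
  then show ?case by (simp add: pmf_entropy_def)
next
  case (Cons a as)
  have fa: "finite (set_pmf (Ch a))" by simp
  have "prod_chan Ch (a # as) = map_pmf (\<lambda>(w, ws). w # ws) (bind_pmf (Ch a) (\<lambda>w. map_pmf (Pair w) (prod_chan Ch as)))"
    by (simp add: map_bind_pmf pmf.map_comp o_def)
  then have "pmf_entropy (prod_chan Ch (a # as)) = pmf_entropy (bind_pmf (Ch a) (\<lambda>w. map_pmf (Pair w) (prod_chan Ch as)))"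
    by (simp, intro pmf_entropy_map_inj)
       (auto simp: inj_on_def intro!: finite_imageI finite_set_pmf_prod_chan)
  also have "\<dots> = pmf_entropy (Ch a) + pmf_entropy (prod_chan Ch as)"
    by (simp add: pmf_entropy_bind_Pair[OF fa] finite_set_pmf_prod_chan
        sum_distrib_right[symmetric] sum_pmf_eq_1[OF fa])
  finally show ?case using Cons by (simp only: length_Cons sum.lessThan_Suc_shift) simp
qed

lemma finite_set_pmf_chan_joint:
  "finite (set_pmf P) \<Longrightarrow> (\<And>x. finite (set_pmf (Ch x))) \<Longrightarrow> finite (set_pmf (chan_joint P Ch))"
  unfolding chan_joint_def by (rule finite_set_pmf_bind_Pair)

lemma mutual_info_chan_joint:
  assumes fP: "finite (set_pmf P)" and fCh: "\<And>x. finite (set_pmf (Ch x))"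
  shows "mutual_info (chan_joint P Ch)
    = pmf_entropy (bind_pmf P Ch) - measure_pmf.expectation P (\<lambda>x. pmf_entropy (Ch x))"
  unfolding mutual_info_eq_entropies[OF finite_set_pmf_chan_joint[OF fP fCh]]
  unfolding chan_joint_def map_fst_bind_Pair map_snd_bind_Pair
  by (simp add: pmf_entropy_bind_Pair[OF fP fCh] expectation_eq_sum[OF fP])

lemma pmf_entropy_concave:
  assumes fM: "finite (set_pmf M)" and fF: "\<And>j. finite (set_pmf (F j))"
  shows "(\<Sum>j\<in>set_pmf M. pmf M j * pmf_entropy (F j)) \<le> pmf_entropy (bind_pmf M F)"
proof -
  let ?T = "bind_pmf M (\<lambda>j. map_pmf (Pair j) (F j))"
  have fT: "finite (set_pmf ?T)" by (rule finite_set_pmf_bind_Pair[OF fM fF])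
  have "entropy_of ?T (\<lambda>t. (fst t, snd t)) \<le> entropy_of ?T fst + entropy_of ?T snd"
    by (rule entropy_of_subadditive[OF fT])
  then show ?thesis
    unfolding entropy_of_def by (simp add: pmf_entropy_bind_Pair[OF fM fF] map_fst_bind_Pair map_snd_bind_Pair)
qed

lemma entropy_of_list_subadditive:
  assumes fin: "finite (set_pmf P)"
  shows "(\<And>\<omega>. \<omega> \<in> set_pmf P \<Longrightarrow> length (V \<omega>) = k) \<Longrightarrow> entropy_of P V \<le> (\<Sum>j<k. entropy_of P (\<lambda>\<omega>. V \<omega> ! j))"
proof (induction k arbitrary: V)
  case 0
  then show ?case using entropy_of_le_log_card[of "{[]}" P V] by simp
next
  case (Suc k)
  have "entropy_of P V = entropy_of P (\<lambda>\<omega>. (hd (V \<omega>), tl (V \<omega>)))"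
    by (rule entropy_of_det_eq[OF fin, where g="\<lambda>v. (hd v, tl v)" and f="\<lambda>(h, t). h # t"])
       (use Suc.prems in \<open>fastforce simp: length_Suc_conv\<close>)+
  also have "\<dots> \<le> entropy_of P (\<lambda>\<omega>. hd (V \<omega>)) + entropy_of P (\<lambda>\<omega>. tl (V \<omega>))"
    by (rule entropy_of_subadditive[OF fin])
  also have "entropy_of P (\<lambda>\<omega>. hd (V \<omega>)) = entropy_of P (\<lambda>\<omega>. V \<omega> ! 0)"
    by (rule entropy_of_cong) (metis Suc.prems hd_conv_nth list.size(3) nat.discI)
  also have "entropy_of P (\<lambda>\<omega>. tl (V \<omega>)) \<le> (\<Sum>j<k. entropy_of P (\<lambda>\<omega>. tl (V \<omega>) ! j))"
    by (rule Suc.IH) (use Suc.prems in auto)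
  also have "(\<Sum>j<k. entropy_of P (\<lambda>\<omega>. tl (V \<omega>) ! j)) = (\<Sum>j<k. entropy_of P (\<lambda>\<omega>. V \<omega> ! Suc j))"
    by (intro sum.cong refl entropy_of_cong) (use Suc.prems in \<open>auto simp: nth_tl\<close>)
  finally show ?case by (simp only: sum.lessThan_Suc_shift)
qed

lemma mutual_info_prod_chan_le_sum:
  fixes Mx :: "'x list pmf" and Ch :: "'x \<Rightarrow> 'y::finite pmf"
  assumes fM: "finite (set_pmf Mx)" and len: "\<And>xs. xs \<in> set_pmf Mx \<Longrightarrow> length xs = l"
  shows "mutual_info (chan_joint Mx (prod_chan Ch))
     \<le> (\<Sum>j<l. mutual_info (chan_joint (map_pmf (\<lambda>xs. xs ! j) Mx) Ch))"
proof -
  let ?T = "chan_joint Mx (prod_chan Ch)" and ?Mj = "\<lambda>j. map_pmf (\<lambda>xs. xs ! j) Mx"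
  have fT: "finite (set_pmf ?T)"
    by (rule finite_set_pmf_chan_joint[OF fM finite_set_pmf_prod_chan])
  have out_j: "map_pmf (\<lambda>t. snd t ! j) ?T = bind_pmf (?Mj j) Ch" if "j < l" for j
  proof -
    have "map_pmf (\<lambda>t. snd t ! j) ?T = bind_pmf Mx (\<lambda>xs. map_pmf (\<lambda>ys. ys ! j) (prod_chan Ch xs))"
      by (simp add: chan_joint_def map_bind_pmf pmf.map_comp o_def)
    also have "\<dots> = bind_pmf Mx (\<lambda>xs. Ch (xs ! j))"
      by (intro bind_pmf_cong refl map_nth_prod_chan) (use that len in auto)
    finally show ?thesis by (simp add: bind_map_pmf)
  qed
  have "pmf_entropy (map_pmf snd ?T) \<le> (\<Sum>j<l. entropy_of ?T (\<lambda>t. snd t ! j))"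
    unfolding entropy_of_def[symmetric]
    by (rule entropy_of_list_subadditive[OF fT]) (use set_pmf_prod_chan len in \<open>fastforce simp: chan_joint_def\<close>)
  also have "\<dots> = (\<Sum>j<l. pmf_entropy (bind_pmf (?Mj j) Ch))"
    by (intro sum.cong refl) (simp add: entropy_of_def out_j)
  also have "map_pmf snd ?T = bind_pmf Mx (prod_chan Ch)"
    by (simp add: chan_joint_def map_snd_bind_Pair)
  finally have out_bound: "pmf_entropy (bind_pmf Mx (prod_chan Ch)) \<le> (\<Sum>j<l. pmf_entropy (bind_pmf (?Mj j) Ch))" .
  have "measure_pmf.expectation Mx (\<lambda>xs. pmf_entropy (prod_chan Ch xs))
      = (\<Sum>j<l. measure_pmf.expectation (?Mj j) (\<lambda>x. pmf_entropy (Ch x)))"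
    by (simp add: expectation_eq_sum[OF fM] pmf_entropy_prod_chan len sum_distrib_left sum.swap[of _ "{..<l}"])
  moreover have "finite (set_pmf (?Mj j))" "finite (set_pmf (Ch x))" for j x using fM by simp_all
  note mutual_info_chan_joint[OF this]
  ultimately show ?thesis using out_bound
    unfolding mutual_info_chan_joint[OF fM finite_set_pmf_prod_chan]
    by (simp add: sum_subtractf)
qed

lemma mutual_info_chan_joint_concave:
  fixes Pj :: "nat \<Rightarrow> 'x pmf" and Ch :: "'x \<Rightarrow> 'y::finite pmf"
  assumes l: "l > 0" and fP: "\<And>j. finite (set_pmf (Pj j))"
  shows "(\<Sum>j<l. mutual_info (chan_joint (Pj j) Ch))
    \<le> real l * mutual_info (chan_joint (bind_pmf (pmf_of_set {..<l}) Pj) Ch)"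
proof -
  let ?J = "pmf_of_set {..<l::nat}"
  have ne: "{..<l} \<noteq> {}" using l by auto
  have sJ: "set_pmf ?J = {..<l}" and pJ: "\<And>j. j \<in> {..<l} \<Longrightarrow> pmf ?J j = 1 / real l"
    using ne by simp_all
  have fJ: "finite (set_pmf ?J)" unfolding sJ by simp
  have fB: "finite (set_pmf (bind_pmf ?J Pj))" using fJ fP by simp
  have fCh: "finite (set_pmf (Ch x))" for x by simp
  have "(\<Sum>j\<in>set_pmf ?J. pmf ?J j * pmf_entropy (bind_pmf (Pj j) Ch))
      \<le> pmf_entropy (bind_pmf ?J (\<lambda>j. bind_pmf (Pj j) Ch))"
    by (rule pmf_entropy_concave[OF fJ]) (use fP in simp)
  then have "(\<Sum>j<l. pmf_entropy (bind_pmf (Pj j) Ch)) / real l \<le> pmf_entropy (bind_pmf (bind_pmf ?J Pj) Ch)"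
    unfolding sJ by (simp add: pJ bind_assoc_pmf sum_divide_distrib)
  then have out_bound: "(\<Sum>j<l. pmf_entropy (bind_pmf (Pj j) Ch)) \<le> real l * pmf_entropy (bind_pmf (bind_pmf ?J Pj) Ch)"
    using l by (simp add: pos_divide_le_eq mult.commute)
  have noise: "measure_pmf.expectation (bind_pmf ?J Pj) (\<lambda>x. pmf_entropy (Ch x))
      = (\<Sum>j<l. measure_pmf.expectation (Pj j) (\<lambda>x. pmf_entropy (Ch x))) / real l"
    by (subst expectation_bind_uniform[OF ne finite_lessThan]) (simp_all add: fP)
  show ?thesis
    using out_bound l
    unfolding mutual_info_chan_joint[OF fP fCh] mutual_info_chan_joint[OF fB fCh] noise
    by (simp add: sum_subtractf right_diff_distrib)
qed

lemma mutual_info_chan_joint_le_log_card: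
  fixes P :: "'x::finite pmf" and Ch :: "'x \<Rightarrow> 'y::finite pmf"
  shows "mutual_info (chan_joint P Ch) \<le> log 2 (real CARD('x))"
proof -
  have fC: "finite (set_pmf (chan_joint P Ch))" by (rule finite_set_pmf_chan_joint) simp_all
  have "pmf_entropy (map_pmf snd (chan_joint P Ch)) \<le> pmf_entropy (chan_joint P Ch)"
    by (rule pmf_entropy_map_le[OF fC])
  moreover have "pmf_entropy P \<le> log 2 (real CARD('x))" by (rule pmf_entropy_le_log_card) auto
  ultimately show ?thesis
    unfolding mutual_info_eq_entropies[OF fC] by (simp add: chan_joint_def map_fst_bind_Pair)
qed

lemma mutual_info_le_capacity_cost:
  fixes P :: "'x::finite pmf" and Ch :: "'x \<Rightarrow> 'y::finite pmf"
  assumes "measure_pmf.expectation P phi \<le> Gam"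
  shows "mutual_info (chan_joint P Ch) \<le> capacity_cost Ch phi Gam"
  unfolding capacity_cost_def
  by (rule cSup_upper)
     (use assms in \<open>auto intro!: bdd_aboveI[of _ "log 2 (real CARD('x))"] mutual_info_chan_joint_le_log_card\<close>)

lemma bind_cond_pmf_fiber: "bind_pmf (map_pmf f M) (\<lambda>c. cond_pmf M {x. f x = c}) = M"
  unfolding bind_map_pmf
  by (rule bind_cond_pmf_cancel[where R="\<lambda>x y. f y = f x"]) (auto intro!: arg_cong[where f="measure M"])

lemma set_cond_pmf_fiber:
  "c \<in> set_pmf (map_pmf f M) \<Longrightarrow> set_pmf (cond_pmf M {x. f x = c}) = {x \<in> set_pmf M. f x = c}"
  by (subst set_cond_pmf) auto

lemma disintegrate_fst:
  "bind_pmf (map_pmf fst J) (\<lambda>a. map_pmf (Pair a) (map_pmf snd (cond_pmf J {t. fst t = a}))) = J"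
proof -
  have "bind_pmf (map_pmf fst J) (\<lambda>a. map_pmf (Pair a) (map_pmf snd (cond_pmf J {t. fst t = a})))
      = bind_pmf (map_pmf fst J) (\<lambda>a. cond_pmf J {t. fst t = a})"
  proof (intro bind_pmf_cong refl)
    fix a assume "a \<in> set_pmf (map_pmf fst J)"
    then show "map_pmf (Pair a) (map_pmf snd (cond_pmf J {t. fst t = a})) = cond_pmf J {t. fst t = a}"
      unfolding pmf.map_comp by (intro map_pmf_idI) (auto simp: set_cond_pmf_fiber)
  qed
  then show ?thesis by (simp only: bind_cond_pmf_fiber)
qed

lemma disintegrate_snd:
  "bind_pmf (map_pmf snd J) (\<lambda>b. map_pmf (\<lambda>a. (a, b)) (map_pmf fst (cond_pmf J {t. snd t = b}))) = J"
proof -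
  have "bind_pmf (map_pmf snd J) (\<lambda>b. map_pmf (\<lambda>a. (a, b)) (map_pmf fst (cond_pmf J {t. snd t = b})))
      = bind_pmf (map_pmf snd J) (\<lambda>b. cond_pmf J {t. snd t = b})"
  proof (intro bind_pmf_cong refl)
    fix b assume "b \<in> set_pmf (map_pmf snd J)"
    then show "map_pmf (\<lambda>a. (a, b)) (map_pmf fst (cond_pmf J {t. snd t = b})) = cond_pmf J {t. snd t = b}"
      unfolding pmf.map_comp by (intro map_pmf_idI) (auto simp: set_cond_pmf_fiber)
  qed
  then show ?thesis by (simp only: bind_cond_pmf_fiber)
qed

section \<open>Wyner--Ziv test channels\<close>

text \<open>\<^const>\<open>wz_joint\<close> for auxiliary variables of arbitrary type, not only \<^typ>\<open>nat\<close>.\<close>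

definition test_channel_joint ::
  "'u list pmf \<Rightarrow> ('u \<Rightarrow> 'w pmf) \<Rightarrow> ('u list \<Rightarrow> 'a pmf) \<Rightarrow> ('u list \<times> 'a \<times> 'w list) pmf" where
  "test_channel_joint Uh Ch K =
     bind_pmf Uh (\<lambda>us. bind_pmf (K us) (\<lambda>a. map_pmf (\<lambda>ws. (us, a, ws)) (prod_chan Ch us)))"

definition wz_info :: "('u \<times> 'a \<times> 'w) pmf \<Rightarrow> real" where
  "wz_info T = mutual_info (map_pmf (\<lambda>(us, a, ws). (us, a)) T) - mutual_info (map_pmf (\<lambda>(us, a, ws). (ws, a)) T)"

lemma wz_rate_eq_wz_info: "wz_rate Uh Ch l K = wz_info (test_channel_joint Uh Ch K) / real l"
  by (simp add: wz_rate_def wz_info_def wz_joint_def test_channel_joint_def)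

lemma wz_distortion_eq:
  "wz_distortion Uh Ch rho K G =
     measure_pmf.expectation (test_channel_joint Uh Ch K) (\<lambda>(us, a, ws). block_dist rho us (G a ws))"
  by (simp add: wz_distortion_def wz_joint_def test_channel_joint_def)

lemma wz_info_eq_mutual_info_of:
  assumes "finite (set_pmf T)"
  shows "wz_info T = mutual_info_of T fst (\<lambda>t. fst (snd t)) - mutual_info_of T (\<lambda>t. snd (snd t)) (\<lambda>t. fst (snd t))"
  unfolding wz_info_def by (simp add: mutual_info_map_eq_mutual_info_of[OF assms, symmetric] case_prod_unfold)

lemma test_channel_joint_bind_Pair:
  "test_channel_joint Uh Ch K = bind_pmf Uh (\<lambda>us. map_pmf (Pair us) (pair_pmf (K us) (prod_chan Ch us)))"
  unfolding test_channel_joint_def pair_pmf_def map_pmf_def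
  by (simp add: bind_assoc_pmf bind_return_pmf)

text \<open>Given \<open>U\<close>, the side information \<open>W\<close> is independent of \<open>A\<close>, so the Wyner--Ziv rate of a
  test channel is the conditional mutual information \<open>I(U;A|W) \<ge> 0\<close>.\<close>

lemma wz_info_test_channel_joint_nonneg:
  fixes Ch :: "'u \<Rightarrow> 'w::finite pmf"
  assumes fU: "finite (set_pmf Uh)" and fK: "\<And>us. finite (set_pmf (K us))"
  shows "0 \<le> wz_info (test_channel_joint Uh Ch K)"
proof -
  let ?T = "test_channel_joint Uh Ch K"
  let ?U = "\<lambda>t :: 'u list \<times> 'a \<times> 'w list. fst t" and ?A = "\<lambda>t :: 'u list \<times> 'a \<times> 'w list. fst (snd t)"
    and ?W = "\<lambda>t :: 'u list \<times> 'a \<times> 'w list. snd (snd t)"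
  have fin: "finite (set_pmf ?T)" unfolding test_channel_joint_bind_Pair
    using fU fK finite_set_pmf_prod_chan by (intro finite_set_pmf_bind_Pair) auto
  have markov: "entropy_of ?T (\<lambda>t. (?U t, ?A t, ?W t)) + entropy_of ?T ?U
      = entropy_of ?T (\<lambda>t. (?U t, ?A t)) + entropy_of ?T (\<lambda>t. (?U t, ?W t))"
    by (rule entropy_of_cond_indep[OF fin _ fU])
       (simp add: test_channel_joint_bind_Pair, simp_all add: fK finite_set_pmf_prod_chan)
  have "entropy_of ?T (\<lambda>t. (?W t, ?U t, ?A t)) + entropy_of ?T ?W
      \<le> entropy_of ?T (\<lambda>t. (?W t, ?U t)) + entropy_of ?T (\<lambda>t. (?W t, ?A t))"
    by (rule entropy_of_submodular[OF fin])
  moreover have "entropy_of ?T (\<lambda>t. (?W t, ?U t, ?A t)) = entropy_of ?T (\<lambda>t. (?U t, ?A t, ?W t))"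
    by (rule entropy_of_det_eq[OF fin, where f="\<lambda>(u, a, w). (w, u, a)" and g="\<lambda>(w, u, a). (u, a, w)"]) auto
  moreover have "entropy_of ?T (\<lambda>t. (?W t, ?U t)) = entropy_of ?T (\<lambda>t. (?U t, ?W t))"
    by (rule entropy_of_det_eq[OF fin, where f="\<lambda>(u, w). (w, u)" and g="\<lambda>(w, u). (u, w)"]) auto
  ultimately show ?thesis
    using markov unfolding wz_info_eq_mutual_info_of[OF fin] mutual_info_of_def by simp
qed

definition mixture_joint :: "('u \<Rightarrow> 'w pmf) \<Rightarrow> 'a pmf \<Rightarrow> ('a \<Rightarrow> 'u list pmf) \<Rightarrow> ('u list \<times> 'a \<times> 'w list) pmf" where
  "mixture_joint Ch \<Lambda> q =
     bind_pmf \<Lambda> (\<lambda>a. bind_pmf (q a) (\<lambda>us. map_pmf (\<lambda>ws. (us, a, ws)) (prod_chan Ch us)))"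

definition component_info :: "('u \<Rightarrow> 'w pmf) \<Rightarrow> ('a \<Rightarrow> 'u list pmf) \<Rightarrow> 'a \<Rightarrow> real" where
  "component_info Ch q a = pmf_entropy (q a) - pmf_entropy (bind_pmf (q a) (prod_chan Ch))"

definition component_distortion :: "('u \<Rightarrow> 'w pmf) \<Rightarrow> ('u \<Rightarrow> 'v \<Rightarrow> real) \<Rightarrow> ('a \<Rightarrow> 'u list pmf)
    \<Rightarrow> ('a \<Rightarrow> 'w list \<Rightarrow> nat \<Rightarrow> 'v) \<Rightarrow> 'a \<Rightarrow> real" where
  "component_distortion Ch rho q G a =
     measure_pmf.expectation (chan_joint (q a) (prod_chan Ch)) (\<lambda>(us, ws). block_dist rho us (G a ws))"

lemma mixture_joint_eq_bind_chan_joint: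
  "mixture_joint Ch \<Lambda> q = bind_pmf \<Lambda> (\<lambda>a. map_pmf (\<lambda>(us, ws). (us, a, ws)) (chan_joint (q a) (prod_chan Ch)))"
  unfolding mixture_joint_def chan_joint_def by (simp add: map_bind_pmf pmf.map_comp o_def)

lemma wz_info_mixture_joint:
  fixes Ch :: "'u \<Rightarrow> 'w::finite pmf"
  assumes f\<Lambda>: "finite (set_pmf \<Lambda>)" and fq: "\<And>a. finite (set_pmf (q a))"
  shows "wz_info (mixture_joint Ch \<Lambda> q) = pmf_entropy (bind_pmf \<Lambda> q)
     - pmf_entropy (bind_pmf (bind_pmf \<Lambda> q) (prod_chan Ch)) - measure_pmf.expectation \<Lambda> (component_info Ch q)"
proof -
  let ?T = "mixture_joint Ch \<Lambda> q"
  let ?U = "\<lambda>t :: 'u list \<times> 'a \<times> 'w list. fst t" and ?A = "\<lambda>t :: 'u list \<times> 'a \<times> 'w list. fst (snd t)"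
    and ?W = "\<lambda>t :: 'u list \<times> 'a \<times> 'w list. snd (snd t)"
  have fW: "finite (set_pmf (bind_pmf (q a) (prod_chan Ch)))" for a
    by (simp add: fq finite_set_pmf_prod_chan)
  have fin: "finite (set_pmf ?T)"
    unfolding mixture_joint_def using f\<Lambda> fq finite_set_pmf_prod_chan by auto
  have "map_pmf (\<lambda>t. (?A t, ?U t)) ?T = bind_pmf \<Lambda> (\<lambda>a. map_pmf (Pair a) (q a))"
    unfolding mixture_joint_def
    by (simp add: map_bind_pmf pmf.map_comp o_def bind_return_pmf' flip: map_pmf_def)
  note AU = entropy_of_bind_Pair[OF this f\<Lambda> fq]
  have "map_pmf (\<lambda>t. (?A t, ?W t)) ?T = bind_pmf \<Lambda> (\<lambda>a. map_pmf (Pair a) (bind_pmf (q a) (prod_chan Ch)))"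
    unfolding mixture_joint_def by (simp add: map_bind_pmf pmf.map_comp o_def)
  note AW = entropy_of_bind_Pair[OF this f\<Lambda> fW]
  have swap: "entropy_of ?T (\<lambda>t. (X t, ?A t)) = entropy_of ?T (\<lambda>t. (?A t, X t))" for X :: "_ \<Rightarrow> 'b"
    by (rule entropy_of_det_eq[OF fin, where f="\<lambda>(a, x). (x, a)" and g="\<lambda>(x, a). (a, x)"]) auto
  have "entropy_of ?T ?U = pmf_entropy (bind_pmf \<Lambda> q)"
    and "entropy_of ?T ?W = pmf_entropy (bind_pmf (bind_pmf \<Lambda> q) (prod_chan Ch))"
    unfolding entropy_of_def mixture_joint_def
    by (simp_all add: map_bind_pmf pmf.map_comp o_def bind_return_pmf' bind_assoc_pmf)
  moreover have "measure_pmf.expectation \<Lambda> (component_info Ch q)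
      = (\<Sum>a\<in>set_pmf \<Lambda>. pmf \<Lambda> a * pmf_entropy (q a))
      - (\<Sum>a\<in>set_pmf \<Lambda>. pmf \<Lambda> a * pmf_entropy (bind_pmf (q a) (prod_chan Ch)))"
    unfolding expectation_eq_sum[OF f\<Lambda>] component_info_def by (simp add: sum_subtractf algebra_simps)
  ultimately show ?thesis
    unfolding wz_info_eq_mutual_info_of[OF fin] mutual_info_of_def swap AU AW by simp
qed

lemma expectation_distortion_mixture_joint:
  fixes Ch :: "'u \<Rightarrow> 'w::finite pmf"
  assumes f\<Lambda>: "finite (set_pmf \<Lambda>)" and fq: "\<And>a. finite (set_pmf (q a))"
  shows "measure_pmf.expectation (mixture_joint Ch \<Lambda> q) (\<lambda>(us, a, ws). block_dist rho us (G a ws))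
     = measure_pmf.expectation \<Lambda> (component_distortion Ch rho q G)"
  unfolding mixture_joint_eq_bind_chan_joint
  by (subst pmf_expectation_bind[OF f\<Lambda>])
     (auto simp: fq finite_set_pmf_prod_chan finite_set_pmf_chan_joint component_distortion_def
        case_prod_unfold expectation_eq_sum[OF f\<Lambda>])

text \<open>Take for \<open>K us\<close> the conditional law of \<open>A\<close> given \<open>U = us\<close>.\<close>

lemma mixture_joint_eq_test_channel_joint:
  obtains K where "test_channel_joint (bind_pmf \<Lambda> q) Ch K = mixture_joint Ch \<Lambda> q"
    and "\<And>us. set_pmf (K us) \<subseteq> set_pmf \<Lambda>"
proof
  define J where "J = bind_pmf \<Lambda> (\<lambda>a. map_pmf (Pair a) (q a))"
  have J_snd: "map_pmf snd J = bind_pmf \<Lambda> q" unfolding J_def by (rule map_snd_bind_Pair)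
  define K where "K us = (if us \<in> set_pmf (bind_pmf \<Lambda> q) then map_pmf fst (cond_pmf J {t. snd t = us}) else \<Lambda>)"
    for us
  have "test_channel_joint (bind_pmf \<Lambda> q) Ch K
      = bind_pmf (bind_pmf (bind_pmf \<Lambda> q) (\<lambda>us. map_pmf (\<lambda>a. (a, us)) (K us)))
          (\<lambda>(a, us). map_pmf (\<lambda>ws. (us, a, ws)) (prod_chan Ch us))"
    unfolding test_channel_joint_def by (simp add: bind_assoc_pmf bind_map_pmf)
  also have "bind_pmf (bind_pmf \<Lambda> q) (\<lambda>us. map_pmf (\<lambda>a. (a, us)) (K us))
      = bind_pmf (map_pmf snd J) (\<lambda>b. map_pmf (\<lambda>a. (a, b)) (map_pmf fst (cond_pmf J {t. snd t = b})))"
    unfolding J_snd by (intro bind_pmf_cong refl) (simp add: K_def)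
  also have "\<dots> = J" by (rule disintegrate_snd)
  finally show "test_channel_joint (bind_pmf \<Lambda> q) Ch K = mixture_joint Ch \<Lambda> q"
    unfolding J_def mixture_joint_def by (simp add: bind_assoc_pmf bind_map_pmf)
  show "set_pmf (K us) \<subseteq> set_pmf \<Lambda>" for us
  proof (cases "us \<in> set_pmf (bind_pmf \<Lambda> q)")
    case True
    then have "set_pmf (cond_pmf J {t. snd t = us}) \<subseteq> set_pmf J"
      using set_cond_pmf_fiber[of us snd J] J_snd by auto
    then show ?thesis using True by (auto simp: K_def J_def)
  qed (simp add: K_def)
qed

lemma pmf_relabel_nat:
  assumes "finite (set_pmf \<Lambda>)"
  obtains \<Lambda>' :: "nat pmf" and h where "set_pmf \<Lambda>' = {0..<card (set_pmf \<Lambda>)}" and "map_pmf h \<Lambda>' = \<Lambda>"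
proof -
  obtain h where h: "bij_betw h {0..<card (set_pmf \<Lambda>)} (set_pmf \<Lambda>)"
    using ex_bij_betw_nat_finite[OF assms] by blast
  define hinv where "hinv = the_inv_into {0..<card (set_pmf \<Lambda>)} h"
  have "set_pmf (map_pmf hinv \<Lambda>) = {0..<card (set_pmf \<Lambda>)}"
    unfolding hinv_def using bij_betw_the_inv_into[OF h] by (simp add: bij_betw_def)
  moreover have "map_pmf h (map_pmf hinv \<Lambda>) = \<Lambda>"
    unfolding pmf.map_comp hinv_def using h by (intro map_pmf_idI) (simp add: f_the_inv_into_f_bij_betw)
  ultimately show ?thesis by (rule that)
qed

lemma small_test_channel_exists:
  fixes Ch :: "'u::finite \<Rightarrow> 'w::finite pmf" and \<Lambda> :: "'a pmf" and q :: "'a \<Rightarrow> 'u list pmf"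
    and G :: "'a \<Rightarrow> 'w list \<Rightarrow> nat \<Rightarrow> 'v"
  assumes f\<Lambda>: "finite (set_pmf \<Lambda>)" and qL: "\<And>a. set_pmf (q a) \<subseteq> {xs. length xs = l}"
  obtains K G' where "\<And>us. set_pmf (K us) \<subseteq> {0..<CARD('u) ^ l + 1}"
    "wz_info (test_channel_joint (bind_pmf \<Lambda> q) Ch K) \<le> wz_info (mixture_joint Ch \<Lambda> q)"
    "measure_pmf.expectation (test_channel_joint (bind_pmf \<Lambda> q) Ch K) (\<lambda>(us, a, ws). block_dist rho us (G' a ws))
       \<le> measure_pmf.expectation (mixture_joint Ch \<Lambda> q) (\<lambda>(us, a, ws). block_dist rho us (G a ws))"
proof -
  let ?L = "{xs :: 'u list. length xs = l}"
  have fL: "finite ?L" and cL: "card ?L = CARD('u) ^ l"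
    using finite_lists_length_eq[of "UNIV :: 'u set" l] card_lists_length_eq[of "UNIV :: 'u set" l] by simp_all
  have fq: "\<And>a. finite (set_pmf (q a))" using qL fL finite_subset by blast
  have qL': "\<And>a. a \<in> set_pmf \<Lambda> \<Longrightarrow> set_pmf (q a) \<subseteq> ?L" using qL by blast
  from mixture_support_reduction[where q=q and \<phi>="component_info Ch q"
      and \<delta>="component_distortion Ch rho q G", OF fL f\<Lambda> qL']
  obtain \<Lambda>2 where \<Lambda>2: "set_pmf \<Lambda>2 \<subseteq> set_pmf \<Lambda>" "card (set_pmf \<Lambda>2) \<le> card ?L + 1"
    "bind_pmf \<Lambda>2 q = bind_pmf \<Lambda> q"
    "measure_pmf.expectation \<Lambda> (component_info Ch q) \<le> measure_pmf.expectation \<Lambda>2 (component_info Ch q)"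
    "measure_pmf.expectation \<Lambda>2 (component_distortion Ch rho q G) \<le> measure_pmf.expectation \<Lambda> (component_distortion Ch rho q G)"
    by blast
  have "finite (set_pmf \<Lambda>2)" using \<Lambda>2(1) f\<Lambda> finite_subset by blast
  then obtain \<Lambda>' h where set_\<Lambda>': "set_pmf \<Lambda>' = {0..<card (set_pmf \<Lambda>2)}" and h: "map_pmf h \<Lambda>' = \<Lambda>2"
    by (rule pmf_relabel_nat)
  have f\<Lambda>': "finite (set_pmf \<Lambda>')" unfolding set_\<Lambda>' by simp
  have mixture: "bind_pmf \<Lambda>' (\<lambda>i. q (h i)) = bind_pmf \<Lambda> q"
    using \<Lambda>2(3) unfolding h[symmetric] by (simp add: bind_map_pmf)
  obtain K where K: "test_channel_joint (bind_pmf \<Lambda> q) Ch K = mixture_joint Ch \<Lambda>' (\<lambda>i. q (h i))"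
    and "\<And>us. set_pmf (K us) \<subseteq> set_pmf \<Lambda>'"
    using mixture_joint_eq_test_channel_joint[of \<Lambda>' "\<lambda>i. q (h i)" Ch] unfolding mixture by blast
  then have "\<And>us. set_pmf (K us) \<subseteq> {0..<CARD('u) ^ l + 1}" using set_\<Lambda>' \<Lambda>2(2) cL by fastforce
  moreover have "wz_info (test_channel_joint (bind_pmf \<Lambda> q) Ch K) \<le> wz_info (mixture_joint Ch \<Lambda> q)"
    using \<Lambda>2(4) unfolding K wz_info_mixture_joint[OF f\<Lambda>' fq] wz_info_mixture_joint[OF f\<Lambda> fq] mixture
    unfolding h[symmetric] by (simp add: component_info_def[abs_def])
  moreover have "measure_pmf.expectation (test_channel_joint (bind_pmf \<Lambda> q) Ch K)
        (\<lambda>(us, a, ws). block_dist rho us (G (h a) ws))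
      \<le> measure_pmf.expectation (mixture_joint Ch \<Lambda> q) (\<lambda>(us, a, ws). block_dist rho us (G a ws))"
    using \<Lambda>2(5) unfolding K expectation_distortion_mixture_joint[OF f\<Lambda>' fq]
      expectation_distortion_mixture_joint[OF f\<Lambda> fq] unfolding h[symmetric]
    by (simp add: component_distortion_def[abs_def])
  ultimately show ?thesis by (rule that)
qed

lemma wz_dr_le_admissible:
  fixes Ch :: "'u::finite \<Rightarrow> 'w::finite pmf"
  assumes fUh: "finite (set_pmf Uh)" and rho_nonneg: "\<forall>a b. rho a b \<ge> 0" and l: "l > 0"
    and admissible: "wz_admissible Uh Ch rho l D K" and rate: "wz_rate Uh Ch l K \<le> R"
  shows "wz_dr Uh Ch rho l R \<le> D"
proof -
  have rate_nonneg: "0 \<le> wz_rate Uh Ch l K'" if adm: "wz_admissible Uh Ch rho l D' K'" for D' K'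
  proof -
    have "finite (set_pmf (K' us))" for us
      using adm finite_subset unfolding wz_admissible_def by blast
    then show ?thesis unfolding wz_rate_eq_wz_info by (simp add: wz_info_test_channel_joint_nonneg[OF fUh])
  qed
  have D_nonneg: "0 \<le> D'" if adm: "wz_admissible Uh Ch rho l D' K'" for D' K'
  proof -
    obtain G where "wz_distortion Uh Ch rho K' G \<le> real l * D'"
      using adm unfolding wz_admissible_def by blast
    moreover have "0 \<le> wz_distortion Uh Ch rho K' G"
      unfolding wz_distortion_def using rho_nonneg
      by (intro integral_nonneg_AE AE_I2) (auto simp: block_dist_def sum_nonneg split: prod.splits)
    ultimately have "0 \<le> real l * D'" by linarith
    then show ?thesis using l by (simp add: zero_le_mult_iff)
  qed
  have "wz_rd Uh Ch rho l D \<le> wz_rate Uh Ch l K"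
    unfolding wz_rd_def using admissible rate_nonneg by (intro cInf_lower bdd_belowI[of _ 0]) auto
  with rate have "wz_rd Uh Ch rho l D \<le> R" by linarith
  then show ?thesis
    unfolding wz_dr_def using admissible D_nonneg by (intro cInf_lower bdd_belowI[of _ 0]) auto
qed

text \<open>Here \<open>B\<close> is a block index, \<open>U\<close> the source
  block (a function of \<open>B\<close>), \<open>W\<close> and \<open>Y\<close> the side-information and channel-output blocks and \<open>Z\<close>
  a decoder state; \<open>(W, Z)\<close> and \<open>Y\<close> are conditionally independent given \<open>B\<close>.\<close>

lemma wz_converse_inequality:
  assumes fin: "finite (set_pmf P)" and U: "\<And>\<omega>. \<omega> \<in> set_pmf P \<Longrightarrow> U \<omega> = fu (B \<omega>)"
    and indep: "entropy_of P (\<lambda>\<omega>. (B \<omega>, (W \<omega>, Z \<omega>), Y \<omega>)) + entropy_of P B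
      = entropy_of P (\<lambda>\<omega>. (B \<omega>, (W \<omega>, Z \<omega>))) + entropy_of P (\<lambda>\<omega>. (B \<omega>, Y \<omega>))"
  shows "mutual_info_of P U (\<lambda>\<omega>. (Z \<omega>, Y \<omega>)) - mutual_info_of P W (\<lambda>\<omega>. (Z \<omega>, Y \<omega>))
    \<le> entropy_of P Z + mutual_info_of P B Y"
proof -
  have "entropy_of P (\<lambda>\<omega>. (U \<omega>, W \<omega>, (Z \<omega>, Y \<omega>))) + entropy_of P U
      \<le> entropy_of P (\<lambda>\<omega>. (U \<omega>, W \<omega>)) + entropy_of P (\<lambda>\<omega>. (U \<omega>, (Z \<omega>, Y \<omega>)))"
    by (rule entropy_of_submodular[OF fin])
  moreover have "entropy_of P (\<lambda>\<omega>. (U \<omega>, W \<omega>)) \<le> entropy_of P (\<lambda>\<omega>. (U \<omega>, Z \<omega>, W \<omega>))"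
    by (rule entropy_of_det_le[OF fin, where f="\<lambda>(u, z, w). (u, w)"]) auto
  moreover have "entropy_of P (\<lambda>\<omega>. (W \<omega>, (Z \<omega>, Y \<omega>))) = entropy_of P (\<lambda>\<omega>. (Y \<omega>, (Z \<omega>, W \<omega>)))"
    by (rule entropy_of_det_eq[OF fin, where f="\<lambda>(y, z, w). (w, z, y)" and g="\<lambda>(w, z, y). (y, z, w)"]) auto
  moreover have "entropy_of P (\<lambda>\<omega>. (U \<omega>, W \<omega>, (Z \<omega>, Y \<omega>))) = entropy_of P (\<lambda>\<omega>. ((U \<omega>, Z \<omega>, W \<omega>), Y \<omega>))"
    by (rule entropy_of_det_eq[OF fin, where f="\<lambda>((u, z, w), y). (u, w, z, y)" and g="\<lambda>(u, w, z, y). ((u, z, w), y)"])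
       auto
  moreover have "entropy_of P (\<lambda>\<omega>. ((U \<omega>, Z \<omega>, W \<omega>), B \<omega>, Y \<omega>)) + entropy_of P (\<lambda>\<omega>. (U \<omega>, Z \<omega>, W \<omega>))
      \<le> entropy_of P (\<lambda>\<omega>. ((U \<omega>, Z \<omega>, W \<omega>), B \<omega>)) + entropy_of P (\<lambda>\<omega>. ((U \<omega>, Z \<omega>, W \<omega>), Y \<omega>))"
    by (rule entropy_of_submodular[OF fin])
  moreover have "entropy_of P (\<lambda>\<omega>. ((U \<omega>, Z \<omega>, W \<omega>), B \<omega>, Y \<omega>)) = entropy_of P (\<lambda>\<omega>. (B \<omega>, (W \<omega>, Z \<omega>), Y \<omega>))"
    by (rule entropy_of_det_eq[OF fin, where f="\<lambda>(b, (w, z), y). ((fu b, z, w), b, y)"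
          and g="\<lambda>((u, z, w), b, y). (b, (w, z), y)"]) (use U in auto)
  moreover have "entropy_of P (\<lambda>\<omega>. ((U \<omega>, Z \<omega>, W \<omega>), B \<omega>)) = entropy_of P (\<lambda>\<omega>. (B \<omega>, (W \<omega>, Z \<omega>)))"
    by (rule entropy_of_det_eq[OF fin, where f="\<lambda>(b, (w, z)). ((fu b, z, w), b)"
          and g="\<lambda>((u, z, w), b). (b, (w, z))"]) (use U in auto)
  moreover have "entropy_of P (\<lambda>\<omega>. (Y \<omega>, (Z \<omega>, W \<omega>))) \<le> entropy_of P Y + entropy_of P (\<lambda>\<omega>. (Z \<omega>, W \<omega>))"
    and "entropy_of P (\<lambda>\<omega>. (Z \<omega>, W \<omega>)) \<le> entropy_of P Z + entropy_of P W"
    by (rule entropy_of_subadditive[OF fin])+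
  ultimately show ?thesis using indep unfolding mutual_info_of_def by linarith
qed

lemma mutual_info_of_through_function:
  assumes fin: "finite (set_pmf P)"
    and law: "map_pmf (\<lambda>\<omega>. (B \<omega>, Y \<omega>)) P = bind_pmf M (\<lambda>b. map_pmf (Pair b) (Ch (f b)))"
    and fM: "finite (set_pmf M)" and fCh: "\<And>c. finite (set_pmf (Ch c))"
  shows "mutual_info_of P B Y = mutual_info_of P (\<lambda>\<omega>. f (B \<omega>)) Y"
proof -
  define K where "K c = cond_pmf M {x. f x = c}" for c
  have "map_pmf (\<lambda>\<omega>. (f (B \<omega>), B \<omega>, Y \<omega>)) P = bind_pmf M (\<lambda>b. map_pmf (\<lambda>y. (f b, b, y)) (Ch (f b)))"
    using arg_cong[OF law, of "map_pmf (\<lambda>(b, y). (f b, b, y))"]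
    by (simp add: map_bind_pmf pmf.map_comp o_def)
  also have "\<dots> = bind_pmf (map_pmf f M) (\<lambda>c. bind_pmf (K c) (\<lambda>b. map_pmf (\<lambda>y. (f b, b, y)) (Ch (f b))))"
    unfolding K_def by (subst (1) bind_cond_pmf_fiber[of f M, symmetric]) (simp add: bind_assoc_pmf)
  also have "\<dots> = bind_pmf (map_pmf f M) (\<lambda>c. map_pmf (Pair c) (pair_pmf (K c) (Ch c)))"
  proof (intro bind_pmf_cong refl)
    fix c assume "c \<in> set_pmf (map_pmf f M)"
    then have "bind_pmf (K c) (\<lambda>b. map_pmf (\<lambda>y. (f b, b, y)) (Ch (f b)))
        = bind_pmf (K c) (\<lambda>b. map_pmf (\<lambda>y. (c, b, y)) (Ch c))"
      by (intro bind_pmf_cong refl) (auto simp: K_def set_cond_pmf_fiber)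
    then show "bind_pmf (K c) (\<lambda>b. map_pmf (\<lambda>y. (f b, b, y)) (Ch (f b)))
        = map_pmf (Pair c) (pair_pmf (K c) (Ch c))"
      by (simp add: pair_pmf_def map_pmf_def bind_assoc_pmf bind_return_pmf)
  qed
  finally have joint: "map_pmf (\<lambda>\<omega>. (f (B \<omega>), B \<omega>, Y \<omega>)) P
      = bind_pmf (map_pmf f M) (\<lambda>c. map_pmf (Pair c) (pair_pmf (K c) (Ch c)))" .
  have "entropy_of P (\<lambda>\<omega>. (f (B \<omega>), B \<omega>, Y \<omega>)) + entropy_of P (\<lambda>\<omega>. f (B \<omega>))
      = entropy_of P (\<lambda>\<omega>. (f (B \<omega>), B \<omega>)) + entropy_of P (\<lambda>\<omega>. (f (B \<omega>), Y \<omega>))"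
    using fM fCh by (intro entropy_of_cond_indep[OF fin joint]) (auto simp: K_def set_cond_pmf_fiber)
  moreover have "entropy_of P (\<lambda>\<omega>. (f (B \<omega>), B \<omega>, Y \<omega>)) = entropy_of P (\<lambda>\<omega>. (B \<omega>, Y \<omega>))"
    by (rule entropy_of_det_eq[OF fin, where f="\<lambda>(b, y). (f b, b, y)" and g="\<lambda>(c, b, y). (b, y)"]) auto
  moreover have "entropy_of P (\<lambda>\<omega>. (f (B \<omega>), B \<omega>)) = entropy_of P B"
    by (rule entropy_of_det_eq[OF fin, where f="\<lambda>b. (f b, b)" and g="snd"]) auto
  ultimately show ?thesis unfolding mutual_info_of_def by linarith
qed

lemma block_eq_map_upt: "block v l b = map v [b * l + 1..<b * l + 1 + l]"
  by (rule nth_equalityI) (simp_all add: block_def del: upt_Suc)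

lemma length_block [simp]: "length (block v l b) = l"
  by (simp add: block_def)

lemma nth_block: "j < l \<Longrightarrow> block v l b ! j = v (b * l + j + 1)"
  by (simp add: block_def del: upt_Suc)

lemma block_cong: "(\<And>i. i \<in> {b * l + 1..<b * l + 1 + l} \<Longrightarrow> v i = v' i) \<Longrightarrow> block v l b = block v' l b"
  unfolding block_eq_map_upt by (auto intro!: map_cong simp del: upt_Suc)

lemma sum_blocks:
  fixes f :: "nat \<Rightarrow> 'a::comm_monoid_add"
  shows "(\<Sum>i=1..m * l. f i) = (\<Sum>b<m. \<Sum>j<l. f (b * l + j + 1))"
proof -
  have "(\<Sum>i=1..m * l. f i) = (\<Sum>k<m * l. f (Suc k))"
    by (simp add: sum.atLeast1_atMost_eq)
  also have "\<dots> = (\<Sum>b<m. sum (\<lambda>k. f (Suc k)) {b * l..<b * l + l})"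
    by (rule sum.nat_group[symmetric])
  also have "\<dots> = (\<Sum>b<m. \<Sum>j<l. f (b * l + j + 1))"
    by (simp add: sum.shift_bounds_nat_ivl[of _ 0 "b * l" l for b, simplified] atLeast0LessThan add.commute)
  finally show ?thesis .
qed

lemma map_Pi_pmf_upt:
  "map_pmf (\<lambda>f. map f [a..<a + k]) (Pi_pmf {a..<a + k} dflt (\<lambda>i. Ch (u i))) = prod_chan Ch (map u [a..<a + k])"
proof (induction k arbitrary: a)
  case (Suc k)
  have upt: "[a..<Suc (a + k)] = a # [Suc a..<Suc (a + k)]" by (simp add: upt_rec)
  have "Pi_pmf {a..<a + Suc k} dflt (\<lambda>i. Ch (u i))
      = map_pmf (\<lambda>(y, f). f(a := y)) (pair_pmf (Ch (u a)) (Pi_pmf {Suc a..<Suc a + k} dflt (\<lambda>i. Ch (u i))))"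
    by (subst Pi_pmf_insert[symmetric]) (auto intro!: arg_cong[where f="\<lambda>A. Pi_pmf A dflt _"])
  then have "map_pmf (\<lambda>f. map f [a..<a + Suc k]) (Pi_pmf {a..<a + Suc k} dflt (\<lambda>i. Ch (u i)))
      = bind_pmf (Ch (u a)) (\<lambda>y. map_pmf (Cons y)
          (map_pmf (\<lambda>f. map f [Suc a..<Suc a + k]) (Pi_pmf {Suc a..<Suc a + k} dflt (\<lambda>i. Ch (u i)))))"
    by (simp add: upt pmf.map_comp o_def case_prod_unfold pair_pmf_def map_pmf_def bind_assoc_pmf
        bind_return_pmf del: upt_Suc)
  moreover have "map_pmf (\<lambda>f. map f [Suc a..<Suc (a + k)]) (Pi_pmf {Suc a..<Suc (a + k)} dflt (\<lambda>i. Ch (u i)))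
      = prod_chan Ch (map u [Suc a..<Suc (a + k)])"
    using Suc.IH[of "Suc a"] by simp
  ultimately show ?case by (simp add: upt del: upt_Suc)
qed simp

lemma map_block_Pi_pmf:
  "map_pmf (\<lambda>f. block f l b) (Pi_pmf {b * l + 1..<b * l + 1 + l} dflt (\<lambda>i. Ch (u i)))
    = prod_chan Ch (block u l b)"
  unfolding block_eq_map_upt by (rule map_Pi_pmf_upt)

lemma run_fsm_cong:
  "(\<And>j. 1 \<le> j \<Longrightarrow> j \<le> k \<Longrightarrow> step j = step' j) \<Longrightarrow> run_fsm step z k = run_fsm step' z k"
  by (induction k) auto

lemma run_fsm_add: "run_fsm step z (a + k) = run_fsm (\<lambda>j. step (a + j)) (run_fsm step z a) k"
  by (induction k) auto

lemma run_fsm_bounded: "z < s \<Longrightarrow> (\<And>j z. z < s \<Longrightarrow> step j z < s) \<Longrightarrow> run_fsm step z k < s"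
  by (induction k) auto

lemma bind_pair_pmf_resample_fst:
  "bind_pmf (pair_pmf (pair_pmf A C) E) (\<lambda>((a0, c), e). map_pmf (\<lambda>a. F a c e) A)
     = map_pmf (\<lambda>((a, c), e). F a c e) (pair_pmf (pair_pmf A C) E)"
proof -
  have "bind_pmf (pair_pmf (pair_pmf A C) E) (\<lambda>((a0, c), e). map_pmf (\<lambda>a. F a c e) A)
      = bind_pmf C (\<lambda>c. bind_pmf E (\<lambda>e. bind_pmf A (\<lambda>a. return_pmf (F a c e))))"
    unfolding pair_pmf_def map_pmf_def by (simp add: bind_assoc_pmf bind_return_pmf bind_pmf_const)
  also have "\<dots> = bind_pmf A (\<lambda>a. bind_pmf C (\<lambda>c. bind_pmf E (\<lambda>e. return_pmf (F a c e))))"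
    by (simp add: bind_commute_pmf[of E A] bind_commute_pmf[of C A])
  also have "\<dots> = map_pmf (\<lambda>((a, c), e). F a c e) (pair_pmf (pair_pmf A C) E)"
    unfolding pair_pmf_def map_pmf_def by (simp add: bind_assoc_pmf bind_return_pmf)
  finally show ?thesis .
qed

lemma map_pair_pmf_regroup:
  "map_pmf (\<lambda>((a, b), (c, e)). ((f a, g b e), h c)) (pair_pmf (pair_pmf A B) (pair_pmf C D))
    = pair_pmf (pair_pmf (map_pmf f A) (map_pmf (\<lambda>(b, e). g b e) (pair_pmf B D))) (map_pmf h C)"
proof -
  have "map_pmf (\<lambda>((a, b), (c, e)). ((f a, g b e), h c)) (pair_pmf (pair_pmf A B) (pair_pmf C D))
     = bind_pmf A (\<lambda>a. bind_pmf B (\<lambda>b. bind_pmf C (\<lambda>c. bind_pmf D (\<lambda>e. return_pmf ((f a, g b e), h c)))))"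
    unfolding pair_pmf_def map_pmf_def by (simp add: bind_assoc_pmf bind_return_pmf)
  also have "\<dots> = bind_pmf A (\<lambda>a. bind_pmf B (\<lambda>b. bind_pmf D (\<lambda>e. bind_pmf C (\<lambda>c. return_pmf ((f a, g b e), h c)))))"
    by (simp add: bind_commute_pmf[of C D])
  also have "\<dots> = pair_pmf (pair_pmf (map_pmf f A) (map_pmf (\<lambda>(b, e). g b e) (pair_pmf B D))) (map_pmf h C)"
    unfolding pair_pmf_def map_pmf_def by (simp add: bind_assoc_pmf bind_return_pmf)
  finally show ?thesis .
qed

lemma map_pmf_comp_snd_pair_pmf: "map_pmf (\<lambda>p. f (snd p)) (pair_pmf A B) = map_pmf f B"
proof -
  have "map_pmf (\<lambda>p. f (snd p)) (pair_pmf A B) = map_pmf f (map_pmf snd (pair_pmf A B))"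
    by (simp add: pmf.map_comp o_def)
  then show ?thesis by (simp only: map_snd_pair_pmf)
qed

lemma finite_set_Pi_pmf:
  "finite A \<Longrightarrow> (\<And>i. finite (set_pmf (p i))) \<Longrightarrow> finite (set_pmf (Pi_pmf A dflt p))"
  by (rule finite_subset[OF set_Pi_pmf_subset']) auto

section \<open>The block structure of a finite-state code\<close>

locale block_code =
  fixes n l :: nat and u :: "nat \<Rightarrow> 'u::finite" and x :: "nat \<Rightarrow> 'x::finite"
    and PWU :: "'u \<Rightarrow> 'w::finite pmf" and PYX :: "'x \<Rightarrow> 'y::finite pmf"
    and g' :: "nat \<Rightarrow> 'w \<Rightarrow> 'y \<Rightarrow> nat \<Rightarrow> nat" and z1d :: nat
  assumes l_pos: "l > 0" and l_dvd: "l dvd n" and n_pos: "n > 0"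
begin

definition "blocks = n div l"
definition "noise = noise_dist n PWU PYX u x"
definition "block_index = pmf_of_set {0..<blocks}"
definition "block_times b = {b * l + 1..<b * l + 1 + l}"
definition "start_state b w y = dec_state l g' z1d w y (b * l + 1)"

definition "start_state_law b = map_pmf (\<lambda>(w, y). start_state b w y)
   (pair_pmf (Pi_pmf ({1..n} - block_times b) undefined (\<lambda>i. PWU (u i)))
             (Pi_pmf ({1..n} - block_times b) undefined (\<lambda>i. PYX (x i))))"

text \<open>The law of \<open>(B, (W\<^sup>l, Z), Y\<^sup>l)\<close>: a uniformly chosen block \<open>B\<close>, the side information and
  channel output on that block, and the decoder state at its start. Given \<open>B\<close> the three
  components are independent, since \<open>Z\<close> only depends on the noise outside block \<open>B\<close>.\<close>

definition "block_law = bind_pmf block_index (\<lambda>b. map_pmf (Pair b)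
   (pair_pmf (pair_pmf (prod_chan PWU (block u l b)) (start_state_law b)) (prod_chan PYX (block x l b))))"

lemma blocks_mult: "blocks * l = n"
  using l_dvd by (simp add: blocks_def)

lemma real_n_eq: "real n = real blocks * real l"
  by (metis blocks_mult of_nat_mult)

lemma sum_over_blocks: "(\<Sum>i=1..n. f i) = (\<Sum>b<blocks. \<Sum>j<l. f (b * l + j + 1))"
  using sum_blocks[of f blocks l] by (simp only: blocks_mult)

lemma blocks_pos: "blocks > 0"
  using n_pos blocks_mult by (cases blocks) auto

lemma set_block_index: "set_pmf block_index = {0..<blocks}"
  unfolding block_index_def using blocks_pos by simp

lemma finite_set_pmf_block_index: "finite (set_pmf block_index)"
  unfolding set_block_index by simp

lemma finite_set_pmf_noise: "finite (set_pmf noise)"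
  unfolding noise_def noise_dist_def by (auto intro!: finite_set_Pi_pmf)

lemma finite_set_pmf_start_state_law: "finite (set_pmf (start_state_law b))"
  unfolding start_state_law_def by (auto intro!: finite_imageI finite_cartesian_product finite_set_Pi_pmf)

lemma finite_set_pmf_block_law: "finite (set_pmf block_law)"
  unfolding block_law_def using finite_set_pmf_block_index finite_set_pmf_start_state_law
  by (auto intro!: finite_imageI simp: finite_set_pmf_prod_chan)

lemma block_end_le: "b < blocks \<Longrightarrow> b * l + l \<le> n"
  using mult_le_mono1[of "Suc b" blocks l] by (simp add: blocks_mult)

lemma block_times_subset: "b < blocks \<Longrightarrow> block_times b \<subseteq> {1..n}"
  using block_end_le[of b] by (auto simp: block_times_def)

lemma start_state_cong:
  "(\<And>i. i \<le> b * l \<Longrightarrow> w i = w' i) \<Longrightarrow> (\<And>i. i \<le> b * l \<Longrightarrow> y i = y' i)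
    \<Longrightarrow> start_state b w y = start_state b w' y'"
  unfolding start_state_def dec_state_def by (rule run_fsm_cong) auto

lemma noise_block_decomposition:
  assumes b: "b < blocks"
  shows "map_pmf (\<lambda>(w, y). ((block w l b, start_state b w y), block y l b)) noise
    = pair_pmf (pair_pmf (prod_chan PWU (block u l b)) (start_state_law b)) (prod_chan PYX (block x l b))"
proof -
  let ?I = "block_times b" and ?R = "{1..n} - block_times b"
  let ?merge = "\<lambda>(f, g) i. if i \<in> ?I then f i else g i"
  have split: "Pi_pmf {1..n} undefined p
      = map_pmf ?merge (pair_pmf (Pi_pmf ?I undefined p) (Pi_pmf ?R undefined p))" for p :: "nat \<Rightarrow> 'z pmf"
  proof -
    have "Pi_pmf (?I \<union> ?R) undefined p = map_pmf ?merge (pair_pmf (Pi_pmf ?I undefined p) (Pi_pmf ?R undefined p))"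
      by (rule Pi_pmf_union) (auto simp: block_times_def)
    moreover have "?I \<union> ?R = {1..n}" using block_times_subset[OF b] by auto
    ultimately show ?thesis by simp
  qed
  have noise_split: "noise = map_pmf (\<lambda>(a, c). (?merge a, ?merge c))
      (pair_pmf (pair_pmf (Pi_pmf ?I undefined (\<lambda>i. PWU (u i))) (Pi_pmf ?R undefined (\<lambda>i. PWU (u i))))
                (pair_pmf (Pi_pmf ?I undefined (\<lambda>i. PYX (x i))) (Pi_pmf ?R undefined (\<lambda>i. PYX (x i)))))"
    unfolding noise_def noise_dist_def split by (rule map_pair[symmetric])
  have "map_pmf (\<lambda>(w, y). ((block w l b, start_state b w y), block y l b)) noise
      = map_pmf (\<lambda>((fw, gw), (fy, gy)). ((block fw l b, start_state b gw gy), block fy l b))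
      (pair_pmf (pair_pmf (Pi_pmf ?I undefined (\<lambda>i. PWU (u i))) (Pi_pmf ?R undefined (\<lambda>i. PWU (u i))))
                (pair_pmf (Pi_pmf ?I undefined (\<lambda>i. PYX (x i))) (Pi_pmf ?R undefined (\<lambda>i. PYX (x i)))))"
  proof -
    have "block (\<lambda>i. if i \<in> ?I then f i else g i) l b = block f l b" for f g :: "nat \<Rightarrow> 'w"
      by (rule block_cong) (simp add: block_times_def)
    moreover have "block (\<lambda>i. if i \<in> ?I then f i else g i) l b = block f l b" for f g :: "nat \<Rightarrow> 'y"
      by (rule block_cong) (simp add: block_times_def)
    moreover have "start_state b (\<lambda>i. if i \<in> ?I then f i else g i) (\<lambda>i. if i \<in> ?I then f' i else g' i)
        = start_state b g g'" for f g f' g'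
      by (rule start_state_cong) (auto simp: block_times_def)
    ultimately show ?thesis unfolding noise_split pmf.map_comp o_def by (simp add: case_prod_unfold)
  qed
  also have "\<dots> = pair_pmf (pair_pmf (map_pmf (\<lambda>f. block f l b) (Pi_pmf ?I undefined (\<lambda>i. PWU (u i))))
       (map_pmf (\<lambda>(gw, gy). start_state b gw gy)
          (pair_pmf (Pi_pmf ?R undefined (\<lambda>i. PWU (u i))) (Pi_pmf ?R undefined (\<lambda>i. PYX (x i))))))
       (map_pmf (\<lambda>f. block f l b) (Pi_pmf ?I undefined (\<lambda>i. PYX (x i))))"
    by (rule map_pair_pmf_regroup)
  finally show ?thesis
    unfolding start_state_law_def block_times_def map_block_Pi_pmf .
qed

lemma block_law_eq_map_noise:
  "block_law = map_pmf (\<lambda>(b, w, y). (b, (block w l b, start_state b w y), block y l b)) (pair_pmf block_index noise)"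
proof -
  have "map_pmf (\<lambda>(b, w, y). (b, (block w l b, start_state b w y), block y l b)) (pair_pmf block_index noise)
      = bind_pmf block_index (\<lambda>b. map_pmf (Pair b) (map_pmf (\<lambda>(w, y). ((block w l b, start_state b w y), block y l b)) noise))"
    unfolding pair_pmf_def map_pmf_def by (simp add: bind_assoc_pmf bind_return_pmf case_prod_unfold)
  also have "\<dots> = block_law"
    unfolding block_law_def by (intro bind_pmf_cong refl) (simp add: noise_block_decomposition set_block_index)
  finally show ?thesis ..
qed

definition "B_rv \<omega> = fst \<omega>"
definition "W_rv \<omega> = fst (fst (snd \<omega>))"
definition "Z_rv \<omega> = snd (fst (snd \<omega>))"
definition "Y_rv \<omega> = snd (snd \<omega>)"
definition "U_rv \<omega> = block u l (fst \<omega>)"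

text \<open>The auxiliary variable is \<open>A = (Z, Y\<^sup>l)\<close>; \<^term>\<open>source_given_aux a\<close> is the law of the source
  block given \<open>A = a\<close> (arbitrary off the support).\<close>

definition "aux_joint = map_pmf (\<lambda>\<omega>. ((Z_rv \<omega>, Y_rv \<omega>), U_rv \<omega>)) block_law"
definition "aux_law = map_pmf fst aux_joint"
definition "source_given_aux a = (if a \<in> set_pmf aux_law
   then map_pmf snd (cond_pmf aux_joint {t. fst t = a}) else return_pmf (replicate l undefined))"

lemma finite_set_pmf_aux_law: "finite (set_pmf aux_law)"
  unfolding aux_law_def aux_joint_def using finite_set_pmf_block_law by simp

lemma aux_joint_disintegration: "bind_pmf aux_law (\<lambda>a. map_pmf (Pair a) (source_given_aux a)) = aux_joint"
proof -
  have "bind_pmf aux_law (\<lambda>a. map_pmf (Pair a) (source_given_aux a))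
      = bind_pmf aux_law (\<lambda>a. map_pmf (Pair a) (map_pmf snd (cond_pmf aux_joint {t. fst t = a})))"
    by (intro bind_pmf_cong refl) (simp add: source_given_aux_def)
  also have "\<dots> = aux_joint" unfolding aux_law_def by (rule disintegrate_fst)
  finally show ?thesis .
qed

lemma length_source_given_aux: "set_pmf (source_given_aux a) \<subseteq> {xs. length xs = l}"
proof (cases "a \<in> set_pmf aux_law")
  case True
  then have "set_pmf (source_given_aux a) \<subseteq> snd ` set_pmf aux_joint"
    by (auto simp: source_given_aux_def aux_law_def set_cond_pmf_fiber)
  also have "\<dots> \<subseteq> {xs. length xs = l}" by (auto simp: aux_joint_def U_rv_def)
  finally show ?thesis .
qed (auto simp: source_given_aux_def)

lemma bind_aux_law_source_given_aux: "bind_pmf aux_law source_given_aux = empirical_dist u n l"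
proof -
  have "bind_pmf aux_law source_given_aux = map_pmf snd (bind_pmf aux_law (\<lambda>a. map_pmf (Pair a) (source_given_aux a)))"
    by (rule map_snd_bind_Pair[symmetric])
  also have "\<dots> = map_pmf (\<lambda>b. block u l b) block_index"
    unfolding aux_joint_disintegration aux_joint_def block_law_def
    by (simp add: map_bind_pmf pmf.map_comp o_def U_rv_def bind_return_pmf' flip: map_pmf_def)
  finally show ?thesis by (simp add: empirical_dist_def block_index_def blocks_def)
qed

text \<open>Given the block index, the side information is independent of \<open>A\<close> and distributed as the
  side-information channel applied to the source block; this is what makes \<open>A\<close> an admissible
  Wyner--Ziv auxiliary variable.\<close>

lemma mixture_joint_aux:
  "mixture_joint PWU aux_law source_given_aux = map_pmf (\<lambda>\<omega>. (U_rv \<omega>, (Z_rv \<omega>, Y_rv \<omega>), W_rv \<omega>)) block_law"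
proof -
  have "mixture_joint PWU aux_law source_given_aux
      = bind_pmf aux_joint (\<lambda>(a, us). map_pmf (\<lambda>ws. (us, a, ws)) (prod_chan PWU us))"
    unfolding mixture_joint_def aux_joint_disintegration[symmetric]
    by (simp add: bind_assoc_pmf bind_map_pmf)
  also have "\<dots> = bind_pmf block_index (\<lambda>b.
      bind_pmf (pair_pmf (pair_pmf (prod_chan PWU (block u l b)) (start_state_law b)) (prod_chan PYX (block x l b)))
        (\<lambda>((a0, c), e). map_pmf (\<lambda>a. (block u l b, (c, e), a)) (prod_chan PWU (block u l b))))"
    unfolding aux_joint_def block_law_def
    by (simp add: bind_map_pmf bind_assoc_pmf Z_rv_def Y_rv_def U_rv_def case_prod_unfold)
  also have "\<dots> = map_pmf (\<lambda>\<omega>. (U_rv \<omega>, (Z_rv \<omega>, Y_rv \<omega>), W_rv \<omega>)) block_law"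
    unfolding bind_pair_pmf_resample_fst block_law_def
    by (simp add: map_bind_pmf pmf.map_comp o_def Z_rv_def Y_rv_def U_rv_def W_rv_def case_prod_unfold)
  finally show ?thesis .
qed

lemma map_block_law_input_output:
  "map_pmf (\<lambda>\<omega>. (block x l (B_rv \<omega>), Y_rv \<omega>)) block_law
    = chan_joint (map_pmf (\<lambda>b. block x l b) block_index) (prod_chan PYX)"
  unfolding block_law_def chan_joint_def
  by (simp add: map_bind_pmf pmf.map_comp o_def B_rv_def Y_rv_def bind_map_pmf map_pmf_comp_snd_pair_pmf)

lemma map_block_law_index_output:
  "map_pmf (\<lambda>\<omega>. (B_rv \<omega>, Y_rv \<omega>)) block_law
    = bind_pmf block_index (\<lambda>b. map_pmf (Pair b) (prod_chan PYX (block x l b)))"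
  unfolding block_law_def
  by (simp add: map_bind_pmf pmf.map_comp o_def B_rv_def Y_rv_def map_pmf_comp_snd_pair_pmf)

lemma Z_rv_bounded:
  assumes "z1d < sd" and "\<forall>t b c z. z < sd \<longrightarrow> g' t b c z < sd"
  shows "\<omega> \<in> set_pmf block_law \<Longrightarrow> Z_rv \<omega> < sd"
  using assms
  by (auto simp: block_law_def Z_rv_def start_state_law_def start_state_def dec_state_def
      intro!: run_fsm_bounded)

lemma average_cost_eq:
  "measure_pmf.expectation (bind_pmf (pmf_of_set {..<l}) (\<lambda>j. map_pmf (\<lambda>xs. xs ! j) (map_pmf (\<lambda>b. block x l b) block_index))) phi
    = (\<Sum>i=1..n. phi (x i)) / real n"
proof -
  have blocks_ne: "{0..<blocks} \<noteq> {}" and l_ne: "{..<l} \<noteq> {}" using blocks_pos l_pos by auto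
  have symbol_j: "measure_pmf.expectation block_index (\<lambda>b. phi (block x l b ! j))
      = (\<Sum>b<blocks. phi (x (b * l + j + 1))) / real blocks" if "j < l" for j
  proof -
    have "measure_pmf.expectation block_index (\<lambda>b. phi (block x l b ! j))
        = measure_pmf.expectation block_index (\<lambda>b. phi (x (b * l + j + 1)))"
      using that by (simp add: nth_block)
    also have "\<dots> = (\<Sum>b\<in>{0..<blocks}. phi (x (b * l + j + 1))) / real (card {0..<blocks})"
      unfolding block_index_def by (rule integral_pmf_of_set[OF blocks_ne finite_atLeastLessThan])
    finally show ?thesis by (simp add: atLeast0LessThan)
  qed
  have "measure_pmf.expectation (bind_pmf (pmf_of_set {..<l}) (\<lambda>j. map_pmf (\<lambda>xs. xs ! j) (map_pmf (\<lambda>b. block x l b) block_index))) phi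
      = (\<Sum>j\<in>{..<l}. measure_pmf.expectation (map_pmf (\<lambda>xs. xs ! j) (map_pmf (\<lambda>b. block x l b) block_index)) phi)
        / real (card {..<l})"
    by (rule expectation_bind_uniform[OF l_ne finite_lessThan]) (simp add: finite_set_pmf_block_index)
  also have "\<dots> = (\<Sum>j<l. (\<Sum>b<blocks. phi (x (b * l + j + 1))) / real blocks) / real l"
  proof -
    have "(\<Sum>j\<in>{..<l}. measure_pmf.expectation (map_pmf (\<lambda>xs. xs ! j) (map_pmf (\<lambda>b. block x l b) block_index)) phi)
        = (\<Sum>j<l. (\<Sum>b<blocks. phi (x (b * l + j + 1))) / real blocks)"
      by (rule sum.cong) (simp_all add: symbol_j)
    then show ?thesis by simp
  qed
  also have "\<dots> = (\<Sum>j<l. \<Sum>b<blocks. phi (x (b * l + j + 1))) / (real blocks * real l)"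
    by (simp add: sum_divide_distrib divide_divide_eq_left)
  also have "\<dots> = (\<Sum>i=1..n. phi (x i)) / real n"
    unfolding sum_over_blocks real_n_eq by (simp only: sum.swap[of _ "{..<l}"])
  finally show ?thesis .
qed

lemma block_law_cond_indep:
  "entropy_of block_law (\<lambda>\<omega>. (B_rv \<omega>, (W_rv \<omega>, Z_rv \<omega>), Y_rv \<omega>)) + entropy_of block_law B_rv
    = entropy_of block_law (\<lambda>\<omega>. (B_rv \<omega>, (W_rv \<omega>, Z_rv \<omega>))) + entropy_of block_law (\<lambda>\<omega>. (B_rv \<omega>, Y_rv \<omega>))"
proof (rule entropy_of_cond_indep[OF finite_set_pmf_block_law _ finite_set_pmf_block_index])
  have id: "(\<lambda>\<omega>. (B_rv \<omega>, (W_rv \<omega>, Z_rv \<omega>), Y_rv \<omega>)) = id"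
    by (auto simp: B_rv_def W_rv_def Z_rv_def Y_rv_def)
  show "map_pmf (\<lambda>\<omega>. (B_rv \<omega>, (W_rv \<omega>, Z_rv \<omega>), Y_rv \<omega>)) block_law
    = bind_pmf block_index (\<lambda>b. map_pmf (Pair b)
        (pair_pmf (pair_pmf (prod_chan PWU (block u l b)) (start_state_law b)) (prod_chan PYX (block x l b))))"
    unfolding id by (simp add: block_law_def)
qed (simp_all add: finite_set_pmf_prod_chan finite_set_pmf_start_state_law)

lemma wz_info_aux_le:
  assumes z1d: "z1d < sd" and g': "\<forall>t b c z. z < sd \<longrightarrow> g' t b c z < sd"
    and cost: "(\<Sum>i=1..n. phi (x i)) / real n \<le> Gam"
  shows "wz_info (mixture_joint PWU aux_law source_given_aux) \<le> log 2 (real sd) + real l * capacity_cost PYX phi Gam"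
proof -
  let ?Mx = "map_pmf (\<lambda>b. block x l b) block_index"
  note fQ = finite_set_pmf_block_law
  have "wz_info (mixture_joint PWU aux_law source_given_aux)
      = mutual_info_of block_law U_rv (\<lambda>\<omega>. (Z_rv \<omega>, Y_rv \<omega>)) - mutual_info_of block_law W_rv (\<lambda>\<omega>. (Z_rv \<omega>, Y_rv \<omega>))"
    unfolding mixture_joint_aux wz_info_def
    by (simp add: mutual_info_map_eq_mutual_info_of[OF fQ, symmetric] pmf.map_comp o_def)
  also have "\<dots> \<le> entropy_of block_law Z_rv + mutual_info_of block_law B_rv Y_rv"
    by (rule wz_converse_inequality[OF fQ _ block_law_cond_indep]) (simp add: U_rv_def B_rv_def)
  also have "mutual_info_of block_law B_rv Y_rv = mutual_info_of block_law (\<lambda>\<omega>. block x l (B_rv \<omega>)) Y_rv"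
    by (rule mutual_info_of_through_function[where Ch="prod_chan PYX" and f="\<lambda>b. block x l b",
          OF fQ map_block_law_index_output finite_set_pmf_block_index])
       (simp add: finite_set_pmf_prod_chan)
  also have "\<dots> = mutual_info (chan_joint ?Mx (prod_chan PYX))"
    by (simp add: mutual_info_map_eq_mutual_info_of[OF fQ, symmetric] map_block_law_input_output)
  also have "\<dots> \<le> (\<Sum>j<l. mutual_info (chan_joint (map_pmf (\<lambda>xs. xs ! j) ?Mx) PYX))"
    by (rule mutual_info_prod_chan_le_sum) (use finite_set_pmf_block_index in auto)
  also have "\<dots> \<le> real l * mutual_info (chan_joint (bind_pmf (pmf_of_set {..<l}) (\<lambda>j. map_pmf (\<lambda>xs. xs ! j) ?Mx)) PYX)"
    by (rule mutual_info_chan_joint_concave[OF l_pos]) (use finite_set_pmf_block_index in simp)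
  also have "\<dots> \<le> real l * capacity_cost PYX phi Gam"
    by (intro mult_left_mono mutual_info_le_capacity_cost) (use cost average_cost_eq in auto)
  also have "entropy_of block_law Z_rv \<le> log 2 (real (card {0..<sd}))"
    by (rule entropy_of_le_log_card) (use Z_rv_bounded[OF z1d g'] in auto)
  finally show ?thesis by simp
qed

end

text \<open>The reconstruction \<open>G(A, W\<^sup>l)\<close> for \<open>A = (z, Y\<^sup>l)\<close>: the decoder is replayed on one block,
  started in state \<open>z\<close>. Its last \<open>d\<close> outputs would need symbols of the next block and are
  replaced by \<open>v0\<close>; this costs the term \<open>\<rho>\<^sub>m\<^sub>a\<^sub>x d / l\<close>.\<close>

definition block_decoder :: "nat \<Rightarrow> nat \<Rightarrow> (nat \<Rightarrow> 'w \<Rightarrow> 'y \<Rightarrow> nat \<Rightarrow> 'v) \<Rightarrow> (nat \<Rightarrow> 'w \<Rightarrow> 'y \<Rightarrow> nat \<Rightarrow> nat)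
    \<Rightarrow> 'v \<Rightarrow> nat \<times> 'y list \<Rightarrow> 'w list \<Rightarrow> nat \<Rightarrow> 'v" where
  "block_decoder l d f' g' v0 a ws j =
     (if j + d < l
      then f' ((j + 1 + d) mod l) (ws ! (j + d)) (snd a ! (j + d))
             (run_fsm (\<lambda>k s. g' (k mod l) (ws ! (k - 1)) (snd a ! (k - 1)) s) (fst a) (j + d))
      else v0)"

lemma sum_tail_le:
  fixes R :: real
  assumes "R \<ge> 0"
  shows "(\<Sum>j<L. if j + d < L then 0 else R) \<le> real d * R"
proof -
  have "(\<Sum>j<L. if j + d < L then 0 else R) = real (card {j\<in>{..<L}. \<not> j + d < L}) * R"
    by (simp add: sum.If_cases Int_def)
  also have "\<dots> \<le> real d * R"
  proof (rule mult_right_mono)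
    have "card {j\<in>{..<L}. \<not> j + d < L} \<le> card {L - d..<L}" by (rule card_mono) auto
    then show "real (card {j\<in>{..<L}. \<not> j + d < L}) \<le> real d" by simp
  qed fact
  finally show ?thesis .
qed

context block_code
begin

lemma dec_state_in_block:
  assumes b: "b < blocks" and k: "k \<le> l"
  shows "dec_state l g' z1d w y (b * l + 1 + k)
    = run_fsm (\<lambda>k s. g' (k mod l) (block w l b ! (k - 1)) (block y l b ! (k - 1)) s) (start_state b w y) k"
proof -
  have "dec_state l g' z1d w y (b * l + 1 + k) = run_fsm (\<lambda>k z. g' (k mod l) (w k) (y k) z) z1d (b * l + k)"
    by (simp add: dec_state_def)
  also have "\<dots> = run_fsm (\<lambda>k s. g' ((b * l + k) mod l) (w (b * l + k)) (y (b * l + k)) s) (start_state b w y) k"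
    by (simp add: run_fsm_add start_state_def dec_state_def)
  also have "\<dots> = run_fsm (\<lambda>k s. g' (k mod l) (block w l b ! (k - 1)) (block y l b ! (k - 1)) s) (start_state b w y) k"
    by (rule run_fsm_cong) (use k in \<open>auto simp: nth_block\<close>)
  finally show ?thesis .
qed

lemma block_decoder_eq_dec_out:
  assumes b: "b < blocks" and jd: "j + d < l"
  shows "block_decoder l d f' g' v0 (start_state b w y, block y l b) (block w l b) j
    = dec_out n l d f' g' z1d vfix w y (b * l + j + 1)"
proof -
  have "b * l + j + 1 + d \<le> n" using block_end_le[OF b] jd by linarith
  moreover have "(b * l + j + 1 + d) mod l = (j + 1 + d) mod l"
    by (simp add: add.assoc)
  moreover have "dec_state l g' z1d w y (b * l + j + 1 + d)
      = run_fsm (\<lambda>k s. g' (k mod l) (block w l b ! (k - 1)) (block y l b ! (k - 1)) s) (start_state b w y) (j + d)"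
    using dec_state_in_block[OF b, of "j + d"] jd by (simp add: add.assoc)
  ultimately show ?thesis
    using jd by (simp add: block_decoder_def dec_out_def nth_block add.assoc)
qed

lemma block_dist_block_decoder_le:
  assumes b: "b < blocks" and rho_nonneg: "\<forall>a c. rho a c \<ge> 0" and rho_le: "\<forall>a c. rho a c \<le> R"
  shows "block_dist rho (block u l b) (block_decoder l d f' g' v0 (start_state b w y, block y l b) (block w l b))
     \<le> (\<Sum>j<l. rho (u (b * l + j + 1)) (dec_out n l d f' g' z1d vfix w y (b * l + j + 1))) + real d * R"
proof -
  have "R \<ge> 0" using rho_nonneg rho_le by (meson order_trans)
  have "block_dist rho (block u l b) (block_decoder l d f' g' v0 (start_state b w y, block y l b) (block w l b))
      \<le> (\<Sum>j<l. rho (u (b * l + j + 1)) (dec_out n l d f' g' z1d vfix w y (b * l + j + 1))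
                + (if j + d < l then 0 else R))"
    unfolding block_dist_def length_block
  proof (intro sum_mono)
    fix j assume "j \<in> {..<l}"
    then show "rho (block u l b ! j) (block_decoder l d f' g' v0 (start_state b w y, block y l b) (block w l b) j)
        \<le> rho (u (b * l + j + 1)) (dec_out n l d f' g' z1d vfix w y (b * l + j + 1)) + (if j + d < l then 0 else R)"
      using block_decoder_eq_dec_out[OF b, where vfix=vfix] rho_nonneg rho_le
      by (auto simp: nth_block add_increasing)
  qed
  also have "\<dots> \<le> (\<Sum>j<l. rho (u (b * l + j + 1)) (dec_out n l d f' g' z1d vfix w y (b * l + j + 1))) + real d * R"
    using sum_tail_le[OF \<open>R \<ge> 0\<close>, where L=l and d=d] by (simp add: sum.distrib)
  finally show ?thesis .
qed

lemma expectation_distortion_aux_le: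
  assumes rho_nonneg: "\<forall>a c. rho a c \<ge> 0" and rho_le: "\<forall>a c. rho a c \<le> R"
  shows "measure_pmf.expectation (mixture_joint PWU aux_law source_given_aux)
      (\<lambda>(us, a, ws). block_dist rho us (block_decoder l d f' g' v0 a ws))
    \<le> real l * ((\<Sum>i=1..n. measure_pmf.expectation noise (\<lambda>(w, y). rho (u i) (dec_out n l d f' g' z1d vfix w y i))) / real n)
      + real d * R"
proof -
  define E where "E i = measure_pmf.expectation noise (\<lambda>(w, y). rho (u i) (dec_out n l d f' g' z1d vfix w y i))" for i
  define F where "F b wy = block_dist rho (block u l b)
     (block_decoder l d f' g' v0 (start_state b (fst wy) (snd wy), block (snd wy) l b) (block (fst wy) l b))" for b wy
  have "measure_pmf.expectation (mixture_joint PWU aux_law source_given_aux)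
      (\<lambda>(us, a, ws). block_dist rho us (block_decoder l d f' g' v0 a ws))
      = measure_pmf.expectation (bind_pmf (pmf_of_set {0..<blocks}) (\<lambda>b. map_pmf (Pair b) noise)) (\<lambda>(b, wy). F b wy)"
    unfolding mixture_joint_aux block_law_eq_map_noise block_index_def pair_pmf_def map_pmf_def[symmetric]
    by (simp add: F_def U_rv_def Z_rv_def Y_rv_def W_rv_def case_prod_unfold)
  also have "\<dots> = (\<Sum>b\<in>{0..<blocks}. measure_pmf.expectation noise (F b)) / real blocks"
    using blocks_pos finite_set_pmf_noise by (subst expectation_bind_uniform) auto
  also have "\<dots> \<le> (\<Sum>b\<in>{0..<blocks}. (\<Sum>j<l. E (b * l + j + 1)) + real d * R) / real blocks"
  proof (intro divide_right_mono sum_mono)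
    fix b assume "b \<in> {0..<blocks}"
    then have "measure_pmf.expectation noise (F b)
        \<le> measure_pmf.expectation noise (\<lambda>wy. (\<Sum>j<l. (\<lambda>(w, y). rho (u (b * l + j + 1))
             (dec_out n l d f' g' z1d vfix w y (b * l + j + 1))) wy) + real d * R)"
      using block_dist_block_decoder_le[OF _ rho_nonneg rho_le] finite_set_pmf_noise
      by (intro integral_mono) (auto simp: F_def case_prod_unfold integrable_measure_pmf_finite)
    also have "\<dots> = (\<Sum>j<l. E (b * l + j + 1)) + real d * R"
      unfolding E_def using finite_set_pmf_noise by (simp add: integrable_measure_pmf_finite)
    finally show "measure_pmf.expectation noise (F b) \<le> (\<Sum>j<l. E (b * l + j + 1)) + real d * R" .
  qed simp
  also have "\<dots> = real l * ((\<Sum>i=1..n. E i) / real n) + real d * R"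
    unfolding sum_over_blocks real_n_eq using blocks_pos l_pos
    by (simp add: atLeast0LessThan sum.distrib field_simps)
  finally show ?thesis unfolding E_def .
qed

end

lemma wz_dr_le_average_distortion:
  fixes PYX :: "'x::finite \<Rightarrow> 'y::finite pmf" and u :: "nat \<Rightarrow> 'u::finite" and PWU :: "'u \<Rightarrow> 'w::finite pmf"
    and rho :: "'u \<Rightarrow> 'v::finite \<Rightarrow> real" and x :: "nat \<Rightarrow> 'x"
  assumes l: "l > 0" and n: "n > 0" and l_dvd: "l dvd n" and rho_nonneg: "\<forall>a b. rho a b \<ge> 0"
    and z1d: "z1d < sd" and g': "\<forall>t b c z. z < sd \<longrightarrow> g' t b c z < sd"
    and cost: "(\<Sum>i=1..n. phi (x i)) / real n \<le> Gam"
    and R: "capacity_cost PYX phi Gam + log 2 (real sd) / real l \<le> R"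
  shows "wz_dr (empirical_dist u n l) PWU rho l R
     \<le> (\<Sum>i=1..n. measure_pmf.expectation (noise_dist n PWU PYX u x)
              (\<lambda>(w, y). rho (u i) (dec_out n l d f' g' z1d vfix w y i))) / real n
        + Max (range (\<lambda>(a, b). rho a b)) * real d / real l"
    (is "_ \<le> ?D / real n + ?\<rho> * real d / real l")
proof -
  interpret block_code n l u x PWU PYX g' z1d by unfold_locales (use l n l_dvd in auto)
  have rho_le: "\<forall>a c. rho a c \<le> ?\<rho>"
  proof (intro allI)
    fix a c
    have "rho a c = (\<lambda>(a, b). rho a b) (a, c)" by simp
    also have "\<dots> \<le> ?\<rho>" by (rule Max_ge) auto
    finally show "rho a c \<le> ?\<rho>" .
  qed
  obtain K G where K: "\<And>us. set_pmf (K us) \<subseteq> {0..<CARD('u) ^ l + 1}"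
    and rate: "wz_info (test_channel_joint (bind_pmf aux_law source_given_aux) PWU K)
      \<le> wz_info (mixture_joint PWU aux_law source_given_aux)"
    and dist: "measure_pmf.expectation (test_channel_joint (bind_pmf aux_law source_given_aux) PWU K)
        (\<lambda>(us, a, ws). block_dist rho us (G a ws))
      \<le> measure_pmf.expectation (mixture_joint PWU aux_law source_given_aux)
        (\<lambda>(us, a, ws). block_dist rho us (block_decoder l d f' g' (vfix 0) a ws))"
    by (rule small_test_channel_exists[where q=source_given_aux and Ch=PWU and rho=rho
          and G="block_decoder l d f' g' (vfix 0)", OF finite_set_pmf_aux_law length_source_given_aux]) blast
  have "real l * (?D / real n + ?\<rho> * real d / real l) = real l * (?D / real n) + real d * ?\<rho>"
    using l by (simp add: distrib_left)
  then have "wz_distortion (empirical_dist u n l) PWU rho K G \<le> real l * (?D / real n + ?\<rho> * real d / real l)"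
    using dist expectation_distortion_aux_le[OF rho_nonneg rho_le, of d f' "vfix 0" vfix]
    unfolding wz_distortion_eq bind_aux_law_source_given_aux noise_def by linarith
  then have "wz_admissible (empirical_dist u n l) PWU rho l (?D / real n + ?\<rho> * real d / real l) K"
    unfolding wz_admissible_def using K by blast
  moreover have "wz_rate (empirical_dist u n l) PWU l K \<le> R"
  proof -
    have "wz_rate (empirical_dist u n l) PWU l K \<le> (log 2 (real sd) + real l * capacity_cost PYX phi Gam) / real l"
      unfolding wz_rate_eq_wz_info bind_aux_law_source_given_aux[symmetric]
      using rate wz_info_aux_le[OF z1d g' cost] l by (simp add: divide_right_mono)
    also have "\<dots> = capacity_cost PYX phi Gam + log 2 (real sd) / real l"
      using l by (simp add: add_divide_distrib)
    finally show ?thesis using R by linarith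
  qed
  moreover have "finite (set_pmf (empirical_dist u n l))"
    using finite_set_pmf_block_index by (simp add: empirical_dist_def block_index_def blocks_def)
  ultimately show ?thesis using wz_dr_le_admissible rho_nonneg l by blast
qed

theorem theorem2:
  fixes PYX :: "'x::finite \<Rightarrow> 'y::finite pmf"
  shows "\<forall>l s\<^sub>e. l > 0 \<longrightarrow> s\<^sub>e > 0 \<longrightarrow>
    (\<exists>\<epsilon> :: nat \<Rightarrow> real. (\<lambda>n. sqrt (real n) * \<epsilon> n) \<longlonglongrightarrow> 0 \<and>
      (\<forall>(n::nat) (u :: nat \<Rightarrow> 'u::finite) (PWU :: 'u \<Rightarrow> 'w::finite pmf)
         (rho :: 'u \<Rightarrow> 'v::finite \<Rightarrow> real) (phi :: 'x \<Rightarrow> real) (\<Gamma>::real) (d::nat) (s\<^sub>d::nat)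
         (f :: nat \<Rightarrow> 'u \<Rightarrow> nat \<Rightarrow> 'x) (g :: nat \<Rightarrow> 'u \<Rightarrow> nat \<Rightarrow> nat) (z1e::nat)
         (f' :: nat \<Rightarrow> 'w \<Rightarrow> 'y \<Rightarrow> nat \<Rightarrow> 'v) (g' :: nat \<Rightarrow> 'w \<Rightarrow> 'y \<Rightarrow> nat \<Rightarrow> nat) (z1d::nat)
         (vfix :: nat \<Rightarrow> 'v).
        n > 0 \<longrightarrow> l dvd n \<longrightarrow> d > 0 \<longrightarrow>
        (\<forall>a b. rho a b \<ge> 0) \<longrightarrow> (\<forall>a. phi a \<ge> 0) \<longrightarrow> \<Gamma> \<ge> 0 \<longrightarrow>
        z1e < s\<^sub>e \<longrightarrow> (\<forall>t a z. z < s\<^sub>e \<longrightarrow> g t a z < s\<^sub>e) \<longrightarrow>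
        z1d < s\<^sub>d \<longrightarrow> (\<forall>t b c z. z < s\<^sub>d \<longrightarrow> g' t b c z < s\<^sub>d) \<longrightarrow>
        (\<Sum>i=1..n. phi (enc_out l f g z1e u i)) / real n \<le> \<Gamma> \<longrightarrow>
        (\<Sum>i=1..n. measure_pmf.expectation (noise_dist n PWU PYX u (enc_out l f g z1e u))
              (\<lambda>(w, y). rho (u i) (dec_out n l d f' g' z1d vfix w y i))) / real n
        \<ge> wz_dr (empirical_dist u n l) PWU rho l
              (capacity_cost PYX phi \<Gamma> + log 2 (real s\<^sub>d) / real l
               + real s\<^sub>e * real CARD('u) ^ l * log 2 (real CARD('y)) / sqrt (real n) + \<epsilon> n)
          - Max (range (\<lambda>(a, b). rho a b)) * real d / real l))"
proof (intro allI impI exI[of _ "\<lambda>_. 0"] conjI)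
  show "(\<lambda>n. sqrt (real n) * 0) \<longlonglongrightarrow> 0" by simp
qed (subst diff_le_eq, rule wz_dr_le_average_distortion, assumption+, simp)

end
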